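(* In the filtered radical-pair control problem described in the context, let $\mathbf{u}^\ast\in\mathcal{V}$ be an optimal control, i.e. $\mathcal{J}(\mathbf{u}^\ast)=\max_{\mathbf{u}\in\mathcal{V}}\mathcal{J}(\mathbf{u})$. Then \[ \max_{\mathbf{u}\in\mathcal{V}}\int_0^T\mathcal{H}\big(\psi(\cdot;\mathbf{u}^\ast),\mathbf{u}(t),\chi(\cdot;\mathbf{u}^\ast)\big)(t)\,dt=\int_0^T\mathcal{H}\big(\psi(\cdot;\mathbf{u}^\ast),\mathbf{u}^\ast(t),\chi(\cdot;\mathbf{u}^\ast)\big)(t)\,dt . \]
   Context: Fix $p\in\mathbb{N}$, $n=2^{p+2}$, $T>0$, real constants $\hbar>0$, $\mu_B$, $g$, rates $k_S,k_T>0$, a filtering parameter $\gamma>0$, $\mathbf{v}_0\in\mathbb{R}^3$, and hyperfine vectors $A_j\in\mathbb{R}^3$, $j=1,\dots,p$. $S_1=(S_{1x},S_{1y},S_{1z})$, $S_2$ are the electron spin operators and $I_j$ the nuclear spin operators (Hermitian $n\times n$ matrices, e.g. $S_{1i}=\tfrac12\sigma_i\otimes E_2\otimes E_{2^p}$, $S_{2i}=E_2\otimes\tfrac12\sigma_i\otimes E_{2^p}$, $\sigma_i$ Pauli matrices), and $P_S,P_T$ the projection matrices onto singlet and triplet subspaces. Define $\mathbf{H}_Z(\mathbf{v})=\mu_B g\sum_{i=x,y,z}(S_{1i}+S_{2i})v_i$, $\mathbf{H}_{hfi}=\mu_B g\sum_{j=1}^p\sum_{i}A_{ji}I_{ji}S_{1i}$,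 $\mathbf{K}=\tfrac12(k_SP_S+k_TP_T)$, $\mathbf{H}(\mathbf{v})=\mathbf{H}_Z(\mathbf{v})+\mathbf{H}_{hfi}-i\mathbf{K}$, $\mathbf{H}^\ast(\mathbf{v})=\mathbf{H}_Z(\mathbf{v})+\mathbf{H}_{hfi}+i\mathbf{K}$. With $\{e_j\}$ the standard basis of $\mathbb{R}^n$, the triplet initial states are $\psi^{j-2^p}_T=(e_j-e_{j+2^p})/\sqrt2$ and $\psi^j_T=e_{j-2^p}$ for $j=2^p+1,\dots,2^{p+1}$, and $\psi^j_T=e_{j+2^p}$ for $j=2^{p+1}+1,\dots,3\cdot2^p$. With $m_i<M_i$, $V=\prod_{i=x,y,z}[m_i,M_i]$ and $\mathcal{V}=\{\mathbf{u}\in L_2(0,T;\mathbb{R}^3):\mathbf{u}(t)\in V\text{ a.e.}\}$. For $\mathbf{u}\in\mathcal{V}$: $\mathbf{v}(t;\mathbf{u})=e^{-\gamma t}[\mathbf{v}_0+\int_0^t\gamma e^{\gamma\tau}\mathbf{u}(\tau)d\tau]$; $\psi^l(\cdot;\mathbf{u})$ solves $i\hbar\,d\psi^l/dt=\mathbf{H}(\mathbf{v}(t;\mathbf{u}))\psi^l$, $\psi^l(0)=\psi^l_T$; $\chi^l(\cdot;\mathbf{u})$ solves $i\hbar\,d\chi^l/dt=\mathbf{H}^\ast(\mathbf{v}(t;\mathbf{u}))\chi^l-i\frac{k_S}{2}P_S\psi^l(t;\mathbf{u})$ on $[0,T)$, $\chi^l(T)=0$, $l=1,\dots,3\cdot2^p$;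 $\psi(\cdot;\mathbf{u})=(\psi^l(\cdot;\mathbf{u}))_l$, $\chi(\cdot;\mathbf{u})=(\chi^l(\cdot;\mathbf{u}))_l$. The cost is $\mathcal{J}(\mathbf{u})=\frac{k_S}{3\cdot2^{p+1}}\sum_{l=1}^{3\cdot2^p}\int_0^T\langle\psi^l(t;\mathbf{u})|P_S|\psi^l(t;\mathbf{u})\rangle_{\mathbb{C}^n}dt$. The Hamilton–Pontryagin function, for trajectories $\psi=(\psi^l),\chi=(\chi^l)$, $t\in[0,T]$ and $\mathbf{w}\in\mathbb{R}^3$, is $\mathcal{H}(\psi,\mathbf{w},\chi)(t)=\frac{\mu_Bg}{3\cdot2^{p-1}}\sum_{l=1}^{3\cdot2^p}\int_t^T\mathrm{Im}\,\langle\chi^l(\tau)|S_1+S_2|\psi^l(\tau)\rangle_{\mathbb{C}^n}\gamma e^{\gamma(t-\tau)}d\tau\cdot\mathbf{w}$ (dot product in $\mathbb{R}^3$). Here $\langle a|M|b\rangle_{\mathbb{C}^n}=\sum\bar a_kM_{kl}b_l$ and $\langle\chi|S_1+S_2|\psi\rangle\in\mathbb{C}^3$ has components $\langle\chi|S_{1i}+S_{2i}|\psi\rangle$. *)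

theory Defs
  imports "HOL-Analysis.Analysis"
begin

text \<open>Vectors of C^n are functions nat => complex (only indices k < n matter,
  0-based: index k corresponds to the paper's basis vector e_(k+1)); matrices are
  nat => nat => complex.  Spatial components x,y,z are the indices 1,2,3 of real^3.\<close>

type_synonym cvec = "nat \<Rightarrow> complex"
type_synonym cmat = "nat \<Rightarrow> nat \<Rightarrow> complex"

definition ndim :: "nat \<Rightarrow> nat" where "ndim p = 2 ^ (p + 2)"

definition eye :: cmat where "eye = (\<lambda>i j. if i = j then 1 else 0)"

definition mmul :: "nat \<Rightarrow> cmat \<Rightarrow> cmat \<Rightarrow> cmat" where
  "mmul n A B = (\<lambda>i j. \<Sum>m<n. A i m * B m j)"

definition mvmul :: "nat \<Rightarrow> cmat \<Rightarrow> cvec \<Rightarrow> cvec" where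
  "mvmul n A x = (\<lambda>i. \<Sum>m<n. A i m * x m)"

definition kron :: "nat \<Rightarrow> cmat \<Rightarrow> cmat \<Rightarrow> cmat" where
  "kron dB A B = (\<lambda>i j. A (i div dB) (j div dB) * B (i mod dB) (j mod dB))"

definition braket :: "nat \<Rightarrow> cvec \<Rightarrow> cmat \<Rightarrow> cvec \<Rightarrow> complex" where
  "braket n a M b = (\<Sum>k<n. \<Sum>l<n. cnj (a k) * M k l * b l)"

text \<open>Pauli matrices sigma_x, sigma_y, sigma_z (indexed by 1,2,3 :: 3; basis 0 = up, 1 = down).\<close>
definition pauli :: "3 \<Rightarrow> cmat" where
  "pauli i = (\<lambda>a b.
     if a \<ge> 2 \<or> b \<ge> 2 then 0
     else if i = 1 then (if a \<noteq> b then 1 else 0)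
     else if i = 2 then (if a = 0 \<and> b = 1 then - \<i> else if a = 1 \<and> b = 0 then \<i> else 0)
     else (if a = b then (if a = 0 then 1 else -1) else 0))"

definition half_pauli :: "3 \<Rightarrow> cmat" where
  "half_pauli i = (\<lambda>a b. pauli i a b / 2)"

text \<open>S_1i = 1/2 sigma_i (x) E_2 (x) E_(2^p),  S_2i = E_2 (x) 1/2 sigma_i (x) E_(2^p).\<close>
definition S1 :: "nat \<Rightarrow> 3 \<Rightarrow> cmat" where
  "S1 p i = kron (2 ^ (p + 1)) (half_pauli i) (kron (2 ^ p) eye eye)"

definition S2 :: "nat \<Rightarrow> 3 \<Rightarrow> cmat" where
  "S2 p i = kron (2 ^ (p + 1)) eye (kron (2 ^ p) (half_pauli i) eye)"

text \<open>Nuclear spin (spin-1/2) operators, j = 1..p: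
  I_ji = E_2 (x) E_2 (x) E_(2^(j-1)) (x) 1/2 sigma_i (x) E_(2^(p-j)).\<close>
definition Inuc :: "nat \<Rightarrow> nat \<Rightarrow> 3 \<Rightarrow> cmat" where
  "Inuc p j i = kron (2 ^ p) (kron 2 eye eye)
                     (kron (2 ^ (p - j)) (kron 2 eye (half_pauli i)) eye)"

text \<open>Singlet projection P_S = |S><S| (x) E_(2^p), with S = (|up,down> - |down,up>)/sqrt 2;
  triplet projection P_T = E_n - P_S.\<close>
definition singlet_vec :: "nat \<Rightarrow> complex" where
  "singlet_vec a = (if a = 1 then 1 / sqrt 2 else if a = 2 then - 1 / sqrt 2 else 0)"

definition PS :: "nat \<Rightarrow> cmat" where
  "PS p = kron (2 ^ p) (\<lambda>a b. singlet_vec a * cnj (singlet_vec b)) eye"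

definition PT :: "nat \<Rightarrow> cmat" where
  "PT p = (\<lambda>a b. eye a b - PS p a b)"

definition HZ :: "nat \<Rightarrow> real \<Rightarrow> real \<Rightarrow> real^3 \<Rightarrow> cmat" where
  "HZ p muB g v = (\<lambda>a b. of_real (muB * g) *
       (\<Sum>i\<in>UNIV. (S1 p i a b + S2 p i a b) * of_real (v $ i)))"

definition Hhfi :: "nat \<Rightarrow> real \<Rightarrow> real \<Rightarrow> (nat \<Rightarrow> real^3) \<Rightarrow> cmat" where
  "Hhfi p muB g A = (\<lambda>a b. of_real (muB * g) *
       (\<Sum>j\<in>{1..p}. \<Sum>i\<in>UNIV. of_real (A j $ i) * mmul (ndim p) (Inuc p j i) (S1 p i) a b))"

definition Kmat :: "nat \<Rightarrow> real \<Rightarrow> real \<Rightarrow> cmat" where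
  "Kmat p kS kT = (\<lambda>a b. (of_real kS * PS p a b + of_real kT * PT p a b) / 2)"

definition Hfull :: "nat \<Rightarrow> real \<Rightarrow> real \<Rightarrow> (nat \<Rightarrow> real^3) \<Rightarrow> real \<Rightarrow> real \<Rightarrow> real^3 \<Rightarrow> cmat" where
  "Hfull p muB g A kS kT v = (\<lambda>a b. HZ p muB g v a b + Hhfi p muB g A a b - \<i> * Kmat p kS kT a b)"

definition Hstar :: "nat \<Rightarrow> real \<Rightarrow> real \<Rightarrow> (nat \<Rightarrow> real^3) \<Rightarrow> real \<Rightarrow> real \<Rightarrow> real^3 \<Rightarrow> cmat" where
  "Hstar p muB g A kS kT v = (\<lambda>a b. HZ p muB g v a b + Hhfi p muB g A a b + \<i> * Kmat p kS kT a b)"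

text \<open>Triplet initial states psi_T^l, 0-based l < 3 * 2^p (paper's l-1), 0-based components.\<close>
definition psiT :: "nat \<Rightarrow> nat \<Rightarrow> cvec" where
  "psiT p l = (\<lambda>k.
     if l < 2 ^ p then
       ((if k = l + 2 ^ p then 1 else 0) - (if k = l + 2 ^ (p + 1) then 1 else 0)) / sqrt 2
     else if l < 2 ^ (p + 1) then (if k = l - 2 ^ p then 1 else 0)
     else if l < 3 * 2 ^ p then (if k = l + 2 ^ p then 1 else 0)
     else 0)"

definition Ctrl :: "real \<Rightarrow> real^3 \<Rightarrow> real^3 \<Rightarrow> (real \<Rightarrow> real^3) set" where
  "Ctrl T m M = {u. set_borel_measurable lborel {0..T} u
                   \<and> set_integrable lborel {0..T} (\<lambda>t. (norm (u t))\<^sup>2)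
                   \<and> (AE t in lborel. t \<in> {0..T} \<longrightarrow> u t \<in> cbox m M)}"

definition vfilt :: "real \<Rightarrow> real^3 \<Rightarrow> (real \<Rightarrow> real^3) \<Rightarrow> real \<Rightarrow> real^3" where
  "vfilt gamma v0 u t = exp (- gamma * t) *\<^sub>R
     (v0 + set_lebesgue_integral lborel {0..t} (\<lambda>\<tau>. (gamma * exp (gamma * \<tau>)) *\<^sub>R u \<tau>))"

definition is_psi_sol :: "nat \<Rightarrow> real \<Rightarrow> real \<Rightarrow> real \<Rightarrow> real \<Rightarrow> (nat \<Rightarrow> real^3) \<Rightarrow> real \<Rightarrow> real
     \<Rightarrow> (real \<Rightarrow> real^3) \<Rightarrow> cvec \<Rightarrow> (real \<Rightarrow> cvec) \<Rightarrow> bool" where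
  "is_psi_sol p T hbar muB g A kS kT v psi0 psi \<longleftrightarrow>
     (\<forall>k < ndim p. psi 0 k = psi0 k) \<and>
     (\<forall>t\<in>{0..T}. \<forall>k < ndim p.
        ((\<lambda>s. psi s k) has_vector_derivative
           mvmul (ndim p) (Hfull p muB g A kS kT (v t)) (psi t) k / (\<i> * of_real hbar))
        (at t within {0..T}))"

definition is_chi_sol :: "nat \<Rightarrow> real \<Rightarrow> real \<Rightarrow> real \<Rightarrow> real \<Rightarrow> (nat \<Rightarrow> real^3) \<Rightarrow> real \<Rightarrow> real
     \<Rightarrow> (real \<Rightarrow> real^3) \<Rightarrow> (real \<Rightarrow> cvec) \<Rightarrow> (real \<Rightarrow> cvec) \<Rightarrow> bool" where
  "is_chi_sol p T hbar muB g A kS kT v psi chi \<longleftrightarrow>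
     (\<forall>k < ndim p. chi T k = 0) \<and>
     (\<forall>k < ndim p. continuous_on {0..T} (\<lambda>s. chi s k)) \<and>
     (\<forall>t\<in>{0..<T}. \<forall>k < ndim p.
        ((\<lambda>s. chi s k) has_vector_derivative
           (mvmul (ndim p) (Hstar p muB g A kS kT (v t)) (chi t) k
            - \<i> * of_real (kS / 2) * mvmul (ndim p) (PS p) (psi t) k) / (\<i> * of_real hbar))
        (at t within {0..T}))"

definition Jcost :: "nat \<Rightarrow> real \<Rightarrow> real \<Rightarrow> (nat \<Rightarrow> real \<Rightarrow> cvec) \<Rightarrow> real" where
  "Jcost p T kS psi = kS / (3 * 2 ^ (p + 1)) *
     (\<Sum>l < 3 * 2 ^ p. set_lebesgue_integral lborel {0..T}
         (\<lambda>t. Re (braket (ndim p) (psi l t) (PS p) (psi l t))))"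

definition HP :: "nat \<Rightarrow> real \<Rightarrow> real \<Rightarrow> real \<Rightarrow> real \<Rightarrow> (nat \<Rightarrow> real \<Rightarrow> cvec) \<Rightarrow> real^3
     \<Rightarrow> (nat \<Rightarrow> real \<Rightarrow> cvec) \<Rightarrow> real \<Rightarrow> real" where
  "HP p T muB g gamma psi w chi t =
     ((muB * g / (3 * 2 powr (real p - 1))) *\<^sub>R
       (\<Sum>l < 3 * 2 ^ p. set_lebesgue_integral lborel {t..T}
          (\<lambda>\<tau>. (gamma * exp (gamma * (t - \<tau>))) *\<^sub>R
                 (\<chi> i. Im (braket (ndim p) (chi l \<tau>) (\<lambda>a b. S1 p i a b + S2 p i a b) (psi l \<tau>))))))
     \<bullet> w"

end

theory Submission
  imports Defs
begin

(* For an admissible u, the controls u_eps = ustar + eps (u - ustar) are admissible and, the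
   filter being affine in the control, their fields are vstar + eps (v_u - vstar).  By Gronwall's
   inequality the corresponding states differ from those of ustar by O(eps).  Since H* is the
   adjoint of H, pairing this difference with the costate chi, which vanishes at T, expresses the
   first-order change of the singlet yield through chi:
     J(u_eps) - J(ustar)
       >= eps (4/kS) muB g sum_l int_0^T Im<chi_l|S1+S2|psi_l> . (v_u - vstar) dt - O(eps^2).
   Optimality of ustar makes the left-hand side nonpositive, hence so is the first-order
   coefficient.  Exchanging the order of integration over the triangle 0 <= t <= tau <= T turns
   this coefficient into a positive multiple of int H(u) - int H(ustar). *)

section \<open>Hermiticity of the spin Hamiltonian\<close>

definition hermitian :: "cmat \<Rightarrow> bool" where
  "hermitian M \<longleftrightarrow> (\<forall>a b. cnj (M b a) = M a b)"

lemma hermitian_eye: "hermitian eye"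
  by (simp add: hermitian_def eye_def)

lemma hermitian_half_pauli: "hermitian (half_pauli i)"
  unfolding hermitian_def half_pauli_def pauli_def by auto

lemma hermitian_kron: "hermitian A \<Longrightarrow> hermitian B \<Longrightarrow> hermitian (kron d A B)"
  unfolding hermitian_def kron_def by simp

lemma hermitian_S1: "hermitian (S1 p i)"
  unfolding S1_def by (intro hermitian_kron hermitian_eye hermitian_half_pauli)

lemma hermitian_S2: "hermitian (S2 p i)"
  unfolding S2_def by (intro hermitian_kron hermitian_eye hermitian_half_pauli)

lemma hermitian_Inuc: "hermitian (Inuc p j i)"
  unfolding Inuc_def by (intro hermitian_kron hermitian_eye hermitian_half_pauli)

lemma hermitian_PS: "hermitian (PS p)"
  unfolding PS_def hermitian_def kron_def eye_def by auto

lemma kron_eye_eye: "0 < d \<Longrightarrow> kron d eye eye = eye"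
  unfolding kron_def eye_def by (auto simp: fun_eq_iff) (metis div_mult_mod_eq)

lemma mod_mult_div_eq_div_mod: "x mod (d * e) div e = x div e mod (d :: nat)"
  by (cases "e = 0") (simp_all add: mult.commute[of d] mod_mult2_eq)

lemma kron_assoc: "kron (d * e) A (kron e B C) = kron e (kron d A B) C"
proof -
  have "x div (d * e) = x div e div d" "x mod (d * e) mod e = x mod e" for x :: nat
    by (simp_all add: div_mult2_eq mult.commute[of d] mod_mod_cancel)
  then show ?thesis
    by (simp add: kron_def fun_eq_iff mod_mult_div_eq_div_mod mult.assoc)
qed

lemma S1_eq_kron: "S1 p i = kron (2 ^ p) (kron 2 (half_pauli i) eye) eye"
  using kron_assoc[of 2 "2 ^ p" "half_pauli i" eye eye] by (simp add: S1_def)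

lemma Inuc_eq_kron: "Inuc p j i = kron (2 ^ p) eye (kron (2 ^ (p - j)) (kron 2 eye (half_pauli i)) eye)"
  by (simp add: Inuc_def kron_eye_eye)

lemma sum_lessThan_mult_single:
  fixes f :: "nat \<Rightarrow> 'a::comm_monoid_add"
  assumes "q < K" "r < N" and zero: "\<And>m. m div N \<noteq> q \<or> m mod N \<noteq> r \<Longrightarrow> f m = 0"
  shows "(\<Sum>m<K * N. f m) = f (q * N + r)"
proof -
  have "Suc q * N \<le> K * N"
    using assms(1) by (intro mult_le_mono1) simp
  then have "q * N + r \<in> {..<K * N}"
    using assms(2) by simp
  moreover have "f m = 0" if "m \<noteq> q * N + r" for m
    using that by (intro zero) (metis div_mult_mod_eq)
  ultimately show ?thesis
    by (subst sum.remove) (auto intro!: sum.neutral)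
qed

lemma mmul_kron_eye_outer_inner:
  assumes "0 < N" "a < K * N" "b < K * N"
  shows "mmul (K * N) (kron N A eye) (kron N eye B) a b = kron N A B a b"
  unfolding mmul_def
  by (subst sum_lessThan_mult_single[of "b div N" K "a mod N"])
     (use assms in \<open>auto simp: kron_def eye_def less_mult_imp_div_less\<close>)

lemma mmul_kron_eye_inner_outer:
  assumes "0 < N" "a < K * N" "b < K * N"
  shows "mmul (K * N) (kron N eye B) (kron N A eye) a b = kron N A B a b"
  unfolding mmul_def
  by (subst sum_lessThan_mult_single[of "a div N" K "b mod N"])
     (use assms in \<open>auto simp: kron_def eye_def less_mult_imp_div_less\<close>)

lemma ndim_eq: "ndim p = 4 * 2 ^ p"
  by (simp add: ndim_def power_add)

lemma Inuc_S1_commute: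
  assumes "a < ndim p" "b < ndim p"
  shows "mmul (ndim p) (Inuc p j i) (S1 p i') a b = mmul (ndim p) (S1 p i') (Inuc p j i) a b"
  using assms unfolding Inuc_eq_kron S1_eq_kron ndim_eq
  by (simp add: mmul_kron_eye_outer_inner mmul_kron_eye_inner_outer)

lemma cnj_mmul_hermitian:
  assumes "hermitian A" "hermitian B"
  shows "cnj (mmul n A B b a) = mmul n B A a b"
  using assms unfolding mmul_def hermitian_def by (simp add: mult.commute)

lemma cnj_HZ: "cnj (HZ p muB g v b a) = HZ p muB g v a b"
  using hermitian_S1 hermitian_S2 unfolding HZ_def hermitian_def by simp

lemma cnj_Hhfi: "a < ndim p \<Longrightarrow> b < ndim p \<Longrightarrow> cnj (Hhfi p muB g A b a) = Hhfi p muB g A a b"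
  unfolding Hhfi_def
  by (simp add: cnj_mmul_hermitian hermitian_S1 hermitian_Inuc Inuc_S1_commute)

lemma cnj_Kmat: "cnj (Kmat p kS kT b a) = Kmat p kS kT a b"
  using hermitian_PS unfolding Kmat_def PT_def hermitian_def eye_def by auto

lemma cnj_Hstar:
  "a < ndim p \<Longrightarrow> b < ndim p \<Longrightarrow> cnj (Hstar p muB g A kS kT v b a) = Hfull p muB g A kS kT v a b"
  unfolding Hstar_def Hfull_def by (simp add: cnj_HZ cnj_Hhfi cnj_Kmat)

definition cinner :: "nat \<Rightarrow> cvec \<Rightarrow> cvec \<Rightarrow> complex" where
  "cinner n x y = (\<Sum>k<n. cnj (x k) * y k)"

lemma braket_eq_cinner: "braket n a M b = cinner n a (mvmul n M b)"
  by (simp add: braket_def cinner_def mvmul_def sum_distrib_left mult.assoc)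

lemma cnj_cinner: "cnj (cinner n x y) = cinner n y x"
  by (simp add: cinner_def mult.commute)

lemma Re_cinner_self: "Re (cinner n x x) = (\<Sum>k<n. (cmod (x k))\<^sup>2)"
  unfolding cinner_def Re_sum
  by (simp add: cmod_power2 power2_eq_square[of "Re _"] power2_eq_square[of "Im _"])

lemma cinner_add_left: "cinner n (\<lambda>k. x k + y k) z = cinner n x z + cinner n y z"
  by (simp add: cinner_def sum.distrib ring_distribs)

lemma cinner_add_right: "cinner n x (\<lambda>k. y k + z k) = cinner n x y + cinner n x z"
  by (simp add: cinner_def sum.distrib ring_distribs)

lemma mvmul_add: "mvmul n M (\<lambda>m. x m + y m) = (\<lambda>k. mvmul n M x k + mvmul n M y k)"
  by (simp add: mvmul_def sum.distrib ring_distribs)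

lemma mvmul_diff: "mvmul n M (y - x) = (\<lambda>k. mvmul n M y k - mvmul n M x k)"
  by (simp add: mvmul_def sum_subtractf ring_distribs)

lemma cinner_diff_right: "cinner n a (\<lambda>k. u k - v k) = cinner n a u - cinner n a v"
  by (simp add: cinner_def sum_subtractf ring_distribs)

lemma cinner_mvmul_adjoint:
  assumes "\<forall>a<n. \<forall>b<n. cnj (M' b a) = M a b"
  shows "cinner n (mvmul n M' x) y = cinner n x (mvmul n M y)"
proof -
  have "cinner n (mvmul n M' x) y = (\<Sum>k<n. \<Sum>m<n. M m k * cnj (x m) * y k)"
    using assms by (simp add: cinner_def mvmul_def sum_distrib_right)
  also have "\<dots> = (\<Sum>m<n. \<Sum>k<n. M m k * cnj (x m) * y k)"
    by (rule sum.swap)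
  also have "\<dots> = cinner n x (mvmul n M y)"
    by (simp add: cinner_def mvmul_def sum_distrib_left mult_ac)
  finally show ?thesis .
qed

lemma has_vector_derivative_cinner:
  assumes "\<And>k. k < n \<Longrightarrow> ((\<lambda>s. x s k) has_vector_derivative x' k) (at t within S)"
    and "\<And>k. k < n \<Longrightarrow> ((\<lambda>s. y s k) has_vector_derivative y' k) (at t within S)"
  shows "((\<lambda>s. cinner n (x s) (y s)) has_vector_derivative (cinner n x' (y t) + cinner n (x t) y'))
           (at t within S)"
proof -
  have "((\<lambda>s. \<Sum>k<n. cnj (x s k) * y s k) has_vector_derivative
          (\<Sum>k<n. cnj (x t k) * y' k + cnj (x' k) * y t k)) (at t within S)"
    by (auto intro!: has_vector_derivative_sum has_vector_derivative_mult has_vector_derivative_cnj assms)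
  then show ?thesis
    unfolding cinner_def by (simp add: sum.distrib add.commute)
qed

lemma continuous_on_cinner:
  assumes "\<And>k. k < n \<Longrightarrow> continuous_on S (\<lambda>s. x s k)" "\<And>k. k < n \<Longrightarrow> continuous_on S (\<lambda>s. y s k)"
  shows "continuous_on S (\<lambda>s. cinner n (x s) (y s))"
  unfolding cinner_def using assms by (auto intro!: continuous_intros)

lemma continuous_on_mvmul:
  assumes "\<And>a b. a < n \<Longrightarrow> b < n \<Longrightarrow> continuous_on S (\<lambda>s. M s a b)"
    and "\<And>k. k < n \<Longrightarrow> continuous_on S (\<lambda>s. y s k)" "k < n"
  shows "continuous_on S (\<lambda>s. mvmul n (M s) (y s) k)"
  unfolding mvmul_def using assms by (auto intro!: continuous_intros)

lemma continuous_on_braket: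
  assumes "\<And>k. k < n \<Longrightarrow> continuous_on S (\<lambda>t. x t k)" "\<And>k. k < n \<Longrightarrow> continuous_on S (\<lambda>t. y t k)"
  shows "continuous_on S (\<lambda>t. braket n (x t) M (y t))"
  unfolding braket_def using assms by (auto intro!: continuous_intros)

lemma norm_mvmul_le:
  assumes "\<And>m. m < n \<Longrightarrow> cmod (M k m) \<le> C" "\<And>m. m < n \<Longrightarrow> cmod (y m) \<le> c" "0 \<le> C"
  shows "cmod (mvmul n M y k) \<le> n * C * c"
proof -
  have "cmod (mvmul n M y k) \<le> (\<Sum>m<n. cmod (M k m) * cmod (y m))"
    unfolding mvmul_def by (rule order_trans[OF norm_sum]) (simp add: norm_mult)
  also have "\<dots> \<le> (\<Sum>m<n. C * c)"
    by (intro sum_mono mult_mono assms) auto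
  finally show ?thesis by simp
qed

lemma norm_cinner_mvmul_le:
  assumes "\<And>k. k < n \<Longrightarrow> cmod (x k) \<le> c'" "\<And>a b. a < n \<Longrightarrow> b < n \<Longrightarrow> cmod (M a b) \<le> C"
    and "\<And>m. m < n \<Longrightarrow> cmod (y m) \<le> c" "0 \<le> C" "0 \<le> c" "0 \<le> c'"
  shows "cmod (cinner n x (mvmul n M y)) \<le> n * c' * (n * C * c)"
proof -
  have "cmod (cinner n x (mvmul n M y)) \<le> (\<Sum>k<n. cmod (x k) * cmod (mvmul n M y k))"
    unfolding cinner_def by (rule order_trans[OF norm_sum]) (simp add: norm_mult)
  also have "\<dots> \<le> (\<Sum>k<n. c' * (n * C * c))"
    by (intro sum_mono mult_mono assms norm_mvmul_le) auto
  finally show ?thesis by simp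
qed

lemma Re_cinner_add_cinner_le:
  "Re (cinner n y x + cinner n x y) \<le> (\<Sum>k<n. (cmod (y k))\<^sup>2) + (\<Sum>k<n. (cmod (x k))\<^sup>2)"
proof -
  have "cinner n y x = cnj (cinner n x y)"
    by (simp add: cnj_cinner)
  then have "Re (cinner n y x + cinner n x y) = 2 * Re (cinner n x y)"
    by simp
  also have "\<dots> \<le> 2 * (\<Sum>k<n. cmod (x k) * cmod (y k))"
    unfolding cinner_def
    by (intro mult_left_mono order_trans[OF complex_Re_le_cmod] order_trans[OF norm_sum])
       (auto simp: norm_mult)
  also have "\<dots> \<le> (\<Sum>k<n. (cmod (y k))\<^sup>2 + (cmod (x k))\<^sup>2)"
    unfolding sum_distrib_left
    by (intro sum_mono) (use sum_squares_bound[of "cmod (x _)" "cmod (y _)"] in \<open>simp add: mult.assoc add.commute\<close>)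
  finally show ?thesis
    by (simp add: sum.distrib)
qed

section \<open>A Gronwall bound for perturbed states\<close>

lemma gronwall_affine:
  fixes N N' :: "real \<Rightarrow> real"
  assumes der: "\<forall>t\<in>{0..T}. (N has_real_derivative N' t) (at t within {0..T})"
    and le: "\<forall>t\<in>{0..T}. N' t \<le> \<alpha> * N t + \<beta>"
    and N0: "N 0 \<le> 0" and "0 \<le> \<alpha>" "0 \<le> \<beta>" and t: "t \<in> {0..T}"
  shows "N t \<le> \<beta> * t * exp (\<alpha> * t)"
proof -
  define g where "g s = exp (- \<alpha> * s) * N s - \<beta> * s" for s
  define g' where "g' s = exp (- \<alpha> * s) * N' s - \<alpha> * exp (- \<alpha> * s) * N s - \<beta>" for s
  have gder: "(g has_real_derivative g' s) (at s within {0..T})" if "s \<in> {0..T}" for s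
    unfolding g_def g'_def using der that by (auto intro!: derivative_eq_intros simp: algebra_simps)
  have "continuous_on {0..t} g"
    using t by (intro continuous_on_subset[OF DERIV_continuous_on[OF gder]]) auto
  moreover have "\<exists>y. (g has_real_derivative y) (at x) \<and> y \<le> 0" if x: "0 < x" "x < t" for x
  proof -
    have "x \<in> interior {0..T}"
      using t x by auto
    then have "(g has_real_derivative g' x) (at x)"
      using gder[of x] x t at_within_interior by fastforce
    moreover have "g' x \<le> 0"
    proof -
      have "exp (- \<alpha> * x) * N' x \<le> exp (- \<alpha> * x) * (\<alpha> * N x + \<beta>)"
        using le x t by (intro mult_left_mono) auto
      moreover have "exp (- \<alpha> * x) * \<beta> \<le> \<beta>"
        using assms x by (simp add: mult_left_le_one_le)
      ultimately show ?thesis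
        unfolding g'_def by (simp add: algebra_simps)
    qed
    ultimately show ?thesis
      by blast
  qed
  ultimately have "g t \<le> g 0"
    using DERIV_nonpos_imp_decreasing_open[of 0 t g] t by simp
  then have "exp (- \<alpha> * t) * N t \<le> \<beta> * t"
    unfolding g_def using N0 by simp
  then have "exp (\<alpha> * t) * (exp (- \<alpha> * t) * N t) \<le> exp (\<alpha> * t) * (\<beta> * t)"
    by (intro mult_left_mono) auto
  then show ?thesis
    by (simp add: exp_minus field_simps)
qed

lemma norm_forced_rhs_le:
  assumes "0 < hbar" "0 \<le> \<epsilon>" "0 \<le> C"
    and "\<forall>a<n. \<forall>b<n. cmod (H a b) \<le> C" "\<forall>k<n. cmod (f k) \<le> B" "k < n"
  shows "cmod ((mvmul n H x k + of_real \<epsilon> * f k) / (\<i> * of_real hbar))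
           \<le> (n * C * sqrt (\<Sum>k<n. (cmod (x k))\<^sup>2) + \<epsilon> * B) / hbar"
proof -
  have "cmod (x m) \<le> sqrt (\<Sum>k<n. (cmod (x k))\<^sup>2)" if "m < n" for m
    using that by (intro real_le_rsqrt member_le_sum) auto
  then have "cmod (mvmul n H x k) \<le> n * C * sqrt (\<Sum>k<n. (cmod (x k))\<^sup>2)"
    using assms by (intro norm_mvmul_le) auto
  moreover have "cmod (of_real \<epsilon> * f k) \<le> \<epsilon> * B"
    using assms by (auto simp: norm_mult intro: mult_left_mono)
  ultimately have "cmod (mvmul n H x k + of_real \<epsilon> * f k) \<le> n * C * sqrt (\<Sum>k<n. (cmod (x k))\<^sup>2) + \<epsilon> * B"
    by (meson norm_triangle_le add_mono)
  then show ?thesis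
    using assms(1) by (simp add: norm_divide norm_mult divide_right_mono)
qed

lemma Re_cinner_forced_rhs_le:
  fixes x f :: cvec and H :: cmat
  assumes hb: "0 < hbar" and "0 \<le> \<epsilon>" "0 \<le> C"
    and "\<forall>a<n. \<forall>b<n. cmod (H a b) \<le> C" "\<forall>k<n. cmod (f k) \<le> B"
  defines "y \<equiv> \<lambda>k. (mvmul n H x k + of_real \<epsilon> * f k) / (\<i> * of_real hbar)"
  shows "Re (cinner n y x + cinner n x y)
           \<le> (1 + 2 * real n ^ 3 * C\<^sup>2 / hbar\<^sup>2) * (\<Sum>k<n. (cmod (x k))\<^sup>2) + \<epsilon>\<^sup>2 * (2 * real n * B\<^sup>2 / hbar\<^sup>2)"
proof -
  define N where "N = (\<Sum>k<n. (cmod (x k))\<^sup>2)"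
  have "(cmod (y k))\<^sup>2 \<le> 2 * ((n * C)\<^sup>2 * N + (\<epsilon> * B)\<^sup>2) / hbar\<^sup>2" if "k < n" for k
  proof -
    have "cmod (y k) \<le> (n * C * sqrt N + \<epsilon> * B) / hbar"
      unfolding y_def N_def using assms that by (intro norm_forced_rhs_le) auto
    then have "(cmod (y k))\<^sup>2 \<le> (n * C * sqrt N + \<epsilon> * B)\<^sup>2 / hbar\<^sup>2"
      by (metis norm_ge_zero power_divide power_mono)
    also have "\<dots> \<le> 2 * ((n * C)\<^sup>2 * N + (\<epsilon> * B)\<^sup>2) / hbar\<^sup>2"
      using sum_squares_bound[of "n * C * sqrt N" "\<epsilon> * B"] sum_nonneg[of "{..<n}" "\<lambda>k. (cmod (x k))\<^sup>2"]
      unfolding N_def by (intro divide_right_mono) (auto simp: power2_sum power_mult_distrib mult_ac)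
    finally show ?thesis .
  qed
  then have "(\<Sum>k<n. (cmod (y k))\<^sup>2) \<le> n * (2 * ((n * C)\<^sup>2 * N + (\<epsilon> * B)\<^sup>2) / hbar\<^sup>2)"
    using sum_mono[of "{..<n}" "\<lambda>k. (cmod (y k))\<^sup>2" "\<lambda>_. 2 * ((n * C)\<^sup>2 * N + (\<epsilon> * B)\<^sup>2) / hbar\<^sup>2"]
    by simp
  moreover have "Re (cinner n y x + cinner n x y) \<le> (\<Sum>k<n. (cmod (y k))\<^sup>2) + N"
    unfolding N_def by (rule Re_cinner_add_cinner_le)
  moreover have "n * (2 * ((n * C)\<^sup>2 * N + (\<epsilon> * B)\<^sup>2) / hbar\<^sup>2) + N
                   = (1 + 2 * real n ^ 3 * C\<^sup>2 / hbar\<^sup>2) * N + \<epsilon>\<^sup>2 * (2 * real n * B\<^sup>2 / hbar\<^sup>2)"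
    using hb by (simp add: field_simps power2_eq_square power3_eq_cube)
  ultimately show ?thesis
    unfolding N_def by linarith
qed

definition perturbation_const :: "nat \<Rightarrow> real \<Rightarrow> real \<Rightarrow> real \<Rightarrow> real \<Rightarrow> real" where
  "perturbation_const n T hbar C B =
     sqrt (2 * real n * B\<^sup>2 / hbar\<^sup>2 * T * exp ((1 + 2 * real n ^ 3 * C\<^sup>2 / hbar\<^sup>2) * T))"

lemma perturbation_const_nonneg: "0 \<le> T \<Longrightarrow> 0 \<le> perturbation_const n T hbar C B"
  unfolding perturbation_const_def by simp

lemma perturbation_bound:
  fixes D f :: "real \<Rightarrow> cvec" and H :: "real \<Rightarrow> cmat"
  assumes "0 < hbar" and "0 \<le> \<epsilon>" "0 \<le> C" "0 \<le> B"
    and dD: "\<forall>t\<in>{0..T}. \<forall>k<n. ((\<lambda>s. D s k) has_vector_derivative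
               (mvmul n (H t) (D t) k + of_real \<epsilon> * f t k) / (\<i> * of_real hbar)) (at t within {0..T})"
    and D0: "\<forall>k<n. D 0 k = 0"
    and "\<forall>t\<in>{0..T}. \<forall>a<n. \<forall>b<n. cmod (H t a b) \<le> C"
    and "\<forall>t\<in>{0..T}. \<forall>k<n. cmod (f t k) \<le> B"
    and t: "t \<in> {0..T}" and k: "k < n"
  shows "cmod (D t k) \<le> \<epsilon> * perturbation_const n T hbar C B"
proof -
  define D' where "D' t k = (mvmul n (H t) (D t) k + of_real \<epsilon> * f t k) / (\<i> * of_real hbar)" for t k
  define N where "N s = (\<Sum>k<n. (cmod (D s k))\<^sup>2)" for s
  define \<alpha> where "\<alpha> = 1 + 2 * real n ^ 3 * C\<^sup>2 / hbar\<^sup>2"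
  define \<beta> where "\<beta> = \<epsilon>\<^sup>2 * (2 * real n * B\<^sup>2 / hbar\<^sup>2)"
  have "(N has_real_derivative Re (cinner n (D' s) (D s) + cinner n (D s) (D' s))) (at s within {0..T})"
    if "s \<in> {0..T}" for s
  proof -
    have "((\<lambda>s. cinner n (D s) (D s)) has_vector_derivative (cinner n (D' s) (D s) + cinner n (D s) (D' s)))
            (at s within {0..T})"
      by (rule has_vector_derivative_cinner) (use dD that in \<open>auto simp: D'_def\<close>)
    from bounded_linear.has_vector_derivative[OF bounded_linear_Re this] show ?thesis
      unfolding N_def Re_cinner_self[symmetric] has_real_derivative_iff_has_vector_derivative by simp
  qed
  moreover have "Re (cinner n (D' s) (D s) + cinner n (D s) (D' s)) \<le> \<alpha> * N s + \<beta>" if "s \<in> {0..T}" for s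
    unfolding D'_def N_def \<alpha>_def \<beta>_def using assms that by (intro Re_cinner_forced_rhs_le) auto
  moreover have "0 \<le> \<alpha>" "0 \<le> \<beta>"
    unfolding \<alpha>_def \<beta>_def by (simp_all add: add_nonneg_nonneg)
  moreover have "N 0 \<le> 0"
    using D0 by (simp add: N_def)
  ultimately have "N t \<le> \<beta> * t * exp (\<alpha> * t)"
    using gronwall_affine[of T N "\<lambda>s. Re (cinner n (D' s) (D s) + cinner n (D s) (D' s))" \<alpha> \<beta> t] t
    by blast
  also have "\<dots> \<le> \<beta> * T * exp (\<alpha> * T)"
    using t \<open>0 \<le> \<alpha>\<close> \<open>0 \<le> \<beta>\<close> by (intro mult_mono) (auto intro: mult_left_mono)
  also have "\<dots> = \<epsilon>\<^sup>2 * (2 * real n * B\<^sup>2 / hbar\<^sup>2 * T * exp (\<alpha> * T))"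
    by (simp add: \<beta>_def)
  finally have "sqrt (N t) \<le> sqrt (\<epsilon>\<^sup>2 * (2 * real n * B\<^sup>2 / hbar\<^sup>2 * T * exp (\<alpha> * T)))"
    by (rule real_sqrt_le_mono)
  also have "\<dots> = \<epsilon> * perturbation_const n T hbar C B"
    using \<open>0 \<le> \<epsilon>\<close> by (simp only: real_sqrt_mult real_sqrt_abs abs_of_nonneg perturbation_const_def \<alpha>_def)
  finally have "sqrt (N t) \<le> \<epsilon> * perturbation_const n T hbar C B" .
  moreover have "cmod (D t k) \<le> sqrt (N t)"
    using k unfolding N_def by (intro real_le_rsqrt member_le_sum) auto
  ultimately show ?thesis
    by linarith
qed

section \<open>First variation of the singlet yield\<close>

lemma mvmul_perturbed_diff:
  "mvmul n (\<lambda>a b. H a b + e * Z a b) y k - mvmul n H x k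
     = mvmul n (\<lambda>a b. H a b + e * Z a b) (y - x) k + e * mvmul n Z x k"
  "mvmul n (\<lambda>a b. H a b + e * Z a b) y k - mvmul n H x k
     = mvmul n H (y - x) k + e * mvmul n Z y k"
  by (simp_all add: mvmul_def sum_distrib_left sum_subtractf[symmetric] sum.distrib[symmetric] algebra_simps)

lemma has_vector_derivative_perturbation:
  assumes "((\<lambda>s. x s k) has_vector_derivative mvmul n H (x t) k / c) (at t within S)"
    and "((\<lambda>s. y s k) has_vector_derivative mvmul n (\<lambda>a b. H a b + e * Z a b) (y t) k / c) (at t within S)"
  shows "((\<lambda>s. y s k - x s k) has_vector_derivative
           (mvmul n (\<lambda>a b. H a b + e * Z a b) (y t - x t) k + e * mvmul n Z (x t) k) / c) (at t within S)"
    and "((\<lambda>s. y s k - x s k) has_vector_derivative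
           (mvmul n H (y t - x t) k + e * mvmul n Z (y t) k) / c) (at t within S)"
proof -
  have d: "((\<lambda>s. y s k - x s k) has_vector_derivative
          (mvmul n (\<lambda>a b. H a b + e * Z a b) (y t) k - mvmul n H (x t) k) / c) (at t within S)"
    using has_vector_derivative_diff[OF assms(2,1)] by (simp only: diff_divide_distrib)
  show "((\<lambda>s. y s k - x s k) has_vector_derivative
          (mvmul n (\<lambda>a b. H a b + e * Z a b) (y t - x t) k + e * mvmul n Z (x t) k) / c) (at t within S)"
    using d by (simp only: mvmul_perturbed_diff(1))
  show "((\<lambda>s. y s k - x s k) has_vector_derivative
          (mvmul n H (y t - x t) k + e * mvmul n Z (y t) k) / c) (at t within S)"
    using d by (simp only: mvmul_perturbed_diff(2))
qed

lemma Re_braket_add: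
  assumes "\<forall>a<n. \<forall>b<n. cnj (P b a) = P a b"
  shows "Re (braket n (\<lambda>k. x k + d k) P (\<lambda>k. x k + d k))
           = Re (braket n x P x) + 2 * Re (cinner n (mvmul n P x) d) + Re (cinner n d (mvmul n P d))"
proof -
  have "cinner n x (mvmul n P d) = cinner n (mvmul n P x) d"
    by (rule cinner_mvmul_adjoint[symmetric]) (use assms in auto)
  moreover have "cinner n d (mvmul n P x) = cnj (cinner n (mvmul n P x) d)"
    by (simp add: cnj_cinner)
  ultimately show ?thesis
    by (simp add: braket_eq_cinner mvmul_add cinner_add_left cinner_add_right)
qed

lemma cinner_diff_scaled_left:
  "cinner n (\<lambda>k. (a k - c * b k) / w) y = (cinner n a y - cnj c * cinner n b y) / cnj w"
  by (simp add: cinner_def sum_divide_distrib sum_subtractf sum_distrib_left algebra_simps diff_divide_distrib)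

lemma cinner_add_scaled_right:
  "cinner n x (\<lambda>k. (a k + c * b k) / w) = (cinner n x a + c * cinner n x b) / w"
  by (simp add: cinner_def sum_divide_distrib sum.distrib sum_distrib_left algebra_simps add_divide_distrib)

text \<open>The Hamiltonian terms cancel because \<open>Hs\<close> is the adjoint of \<open>H\<close>.\<close>

lemma has_vector_derivative_costate_pairing:
  fixes x y chi :: "real \<Rightarrow> cvec" and H Hs Z P :: cmat
  assumes "\<And>k. k < n \<Longrightarrow> ((\<lambda>s. chi s k) has_vector_derivative
             (mvmul n Hs (chi t) k - \<i> * of_real (kS / 2) * mvmul n P (x t) k) / (\<i> * of_real hbar)) (at t within S)"
    and "\<And>k. k < n \<Longrightarrow> ((\<lambda>s. y s k - x s k) has_vector_derivative
             (mvmul n H (y t - x t) k + of_real \<epsilon> * mvmul n Z (y t) k) / (\<i> * of_real hbar)) (at t within S)"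
    and "\<forall>a<n. \<forall>b<n. cnj (Hs b a) = H a b"
  shows "((\<lambda>s. cinner n (chi s) (y s - x s)) has_vector_derivative
           (of_real \<epsilon> * cinner n (chi t) (mvmul n Z (y t))
            - \<i> * of_real (kS / 2) * cinner n (mvmul n P (x t)) (y t - x t)) / (\<i> * of_real hbar))
           (at t within S)"
proof -
  have "((\<lambda>s. cinner n (chi s) (y s - x s)) has_vector_derivative
          cinner n (\<lambda>k. (mvmul n Hs (chi t) k - \<i> * of_real (kS / 2) * mvmul n P (x t) k) / (\<i> * of_real hbar))
            (y t - x t)
        + cinner n (chi t) (\<lambda>k. (mvmul n H (y t - x t) k + of_real \<epsilon> * mvmul n Z (y t) k) / (\<i> * of_real hbar)))
        (at t within S)"
    by (rule has_vector_derivative_cinner) (use assms in auto)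
  moreover have "cinner n (mvmul n Hs (chi t)) (y t - x t) = cinner n (chi t) (mvmul n H (y t - x t))"
    using assms(3) by (rule cinner_mvmul_adjoint)
  ultimately show ?thesis
    unfolding cinner_diff_scaled_left cinner_add_scaled_right by (simp add: diff_divide_distrib[symmetric])
qed

text \<open>Since \<open>chi T = 0\<close> and \<open>y 0 = x 0\<close>, the pairing \<open>\<langle>chi, y - x\<rangle>\<close> vanishes at both ends of \<open>[0, T]\<close>.\<close>

lemma adjoint_pairing_integral:
  fixes x y chi :: "real \<Rightarrow> cvec" and H Hs Z :: "real \<Rightarrow> cmat" and P :: cmat
  assumes T: "0 < T" and hb: "0 < hbar" and \<epsilon>: "0 < \<epsilon>"
    and dD: "\<forall>t\<in>{0..T}. \<forall>k<n. ((\<lambda>s. y s k - x s k) has_vector_derivative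
               (mvmul n (H t) (y t - x t) k + of_real \<epsilon> * mvmul n (Z t) (y t) k) / (\<i> * of_real hbar))
               (at t within {0..T})"
    and init: "\<forall>k<n. y 0 k = x 0 k"
    and chiT: "\<forall>k<n. chi T k = 0"
    and chic: "\<forall>k<n. continuous_on {0..T} (\<lambda>s. chi s k)"
    and dchi: "\<forall>t\<in>{0..<T}. \<forall>k<n. ((\<lambda>s. chi s k) has_vector_derivative
               (mvmul n (Hs t) (chi t) k - \<i> * of_real (kS / 2) * mvmul n P (x t) k) / (\<i> * of_real hbar))
               (at t within {0..T})"
    and adjH: "\<forall>t\<in>{0..T}. \<forall>a<n. \<forall>b<n. cnj (Hs t b a) = H t a b"
    and I: "((\<lambda>t. cinner n (mvmul n P (x t)) (y t - x t)) has_integral I) {0..T}"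
  shows "((\<lambda>t. cinner n (chi t) (mvmul n (Z t) (y t))) has_integral \<i> * of_real (kS / (2 * \<epsilon>)) * I) {0..T}"
proof -
  define A where "A t = cinner n (chi t) (mvmul n (Z t) (y t))" for t
  define B where "B t = cinner n (mvmul n P (x t)) (y t - x t)" for t
  define g' where "g' t = (of_real \<epsilon> * A t - \<i> * of_real (kS / 2) * B t) / (\<i> * of_real hbar)" for t
  have "((\<lambda>s. cinner n (chi s) (y s - x s)) has_vector_derivative g' t) (at t)" if t: "t \<in> {0<..<T}" for t
  proof -
    have "((\<lambda>s. cinner n (chi s) (y s - x s)) has_vector_derivative g' t) (at t within {0..T})"
      unfolding g'_def A_def B_def
      by (rule has_vector_derivative_costate_pairing[where H = "H t" and Hs = "Hs t"])
         (use dchi dD adjH t in auto)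
    moreover have "at t within {0..T} = at t"
      using t by (intro at_within_interior) auto
    ultimately show ?thesis
      by simp
  qed
  moreover have "continuous_on {0..T} (\<lambda>s. y s k - x s k)" if "k < n" for k
    by (rule continuous_on_vector_derivative) (use dD that in blast)
  then have "continuous_on {0..T} (\<lambda>s. cinner n (chi s) (y s - x s))"
    using chic by (intro continuous_on_cinner) auto
  ultimately have "(g' has_integral (cinner n (chi T) (y T - x T) - cinner n (chi 0) (y 0 - x 0))) {0..T}"
    using T by (intro fundamental_theorem_of_calculus_interior) (blast intro: less_imp_le)+
  then have "(g' has_integral 0) {0..T}"
    using chiT init by (simp add: cinner_def)
  then have "((\<lambda>t. (\<i> * of_real hbar * g' t + \<i> * of_real (kS / 2) * B t) / of_real \<epsilon>) has_integral
               (\<i> * of_real hbar * 0 + \<i> * of_real (kS / 2) * I) / of_real \<epsilon>) {0..T}"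
    using I unfolding B_def by (intro has_integral_divide has_integral_add has_integral_mult_right)
  moreover have "(\<i> * of_real hbar * g' t + \<i> * of_real (kS / 2) * B t) / of_real \<epsilon> = A t" for t
    unfolding g'_def using \<epsilon> hb by (simp add: field_simps)
  ultimately show ?thesis
    unfolding A_def by (simp add: field_simps)
qed

context
  fixes n :: nat and T hbar kS \<epsilon> :: real and x y chi :: "real \<Rightarrow> cvec"
    and H Hs Z :: "real \<Rightarrow> cmat" and P :: cmat
  assumes T: "0 < T" and hb: "0 < hbar" and kS: "0 < kS" and \<epsilon>: "0 < \<epsilon>"
    and dx: "\<forall>t\<in>{0..T}. \<forall>k<n. ((\<lambda>s. x s k) has_vector_derivative
               mvmul n (H t) (x t) k / (\<i> * of_real hbar)) (at t within {0..T})"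
    and dy: "\<forall>t\<in>{0..T}. \<forall>k<n. ((\<lambda>s. y s k) has_vector_derivative
               mvmul n (\<lambda>a b. H t a b + of_real \<epsilon> * Z t a b) (y t) k / (\<i> * of_real hbar))
               (at t within {0..T})"
    and init: "\<forall>k<n. y 0 k = x 0 k"
    and chiT: "\<forall>k<n. chi T k = 0"
    and chic: "\<forall>k<n. continuous_on {0..T} (\<lambda>s. chi s k)"
    and dchi: "\<forall>t\<in>{0..<T}. \<forall>k<n. ((\<lambda>s. chi s k) has_vector_derivative
               (mvmul n (Hs t) (chi t) k - \<i> * of_real (kS / 2) * mvmul n P (x t) k) / (\<i> * of_real hbar))
               (at t within {0..T})"
    and adjH: "\<forall>t\<in>{0..T}. \<forall>a<n. \<forall>b<n. cnj (Hs t b a) = H t a b"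
    and adjP: "\<forall>a<n. \<forall>b<n. cnj (P b a) = P a b"
begin

text \<open>The adjoint pairing turns the first-order part of the cost difference into the costate term;
  the rest is quadratic in \<open>y - x\<close>.\<close>

lemma has_integral_cost_difference:
  assumes Jy: "((\<lambda>t. Re (braket n (y t) P (y t))) has_integral Jy) {0..T}"
    and Jx: "((\<lambda>t. Re (braket n (x t) P (x t))) has_integral Jx) {0..T}"
    and L: "((\<lambda>t. Im (cinner n (chi t) (mvmul n (Z t) (x t)))) has_integral L) {0..T}"
  shows "((\<lambda>t. 4 * \<epsilon> / kS * Im (cinner n (chi t) (mvmul n (Z t) (y t - x t)))
                + Re (cinner n (y t - x t) (mvmul n P (y t - x t))))
           has_integral Jy - Jx - \<epsilon> * (4 / kS) * L) {0..T}"
proof -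
  have dD: "\<forall>t\<in>{0..T}. \<forall>k<n. ((\<lambda>s. y s k - x s k) has_vector_derivative
              (mvmul n (H t) (y t - x t) k + of_real \<epsilon> * mvmul n (Z t) (y t) k) / (\<i> * of_real hbar))
              (at t within {0..T})"
    using has_vector_derivative_perturbation(2) dx dy by blast
  have Dc: "continuous_on {0..T} (\<lambda>s. y s k - x s k)" if "k < n" for k
    by (rule continuous_on_vector_derivative) (use dD that in blast)
  have xc: "continuous_on {0..T} (\<lambda>s. x s k)" if "k < n" for k
    by (rule continuous_on_vector_derivative) (use dx that in blast)
  have "continuous_on {0..T} (\<lambda>t. cinner n (mvmul n P (x t)) (y t - x t))"
    by (intro continuous_on_cinner continuous_on_mvmul) (auto intro: Dc xc)
  then obtain I where I: "((\<lambda>t. cinner n (mvmul n P (x t)) (y t - x t)) has_integral I) {0..T}"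
    using integrable_continuous_interval by blast
  have "((\<lambda>t. cinner n (chi t) (mvmul n (Z t) (y t))) has_integral \<i> * of_real (kS / (2 * \<epsilon>)) * I) {0..T}"
    by (rule adjoint_pairing_integral[OF T hb \<epsilon> dD init chiT chic dchi adjH I])
  then have "((\<lambda>t. Im (cinner n (chi t) (mvmul n (Z t) (y t))) - Im (cinner n (chi t) (mvmul n (Z t) (x t))))
               has_integral (kS / (2 * \<epsilon>) * Re I - L)) {0..T}"
    using L by (intro has_integral_diff) (auto dest: has_integral_Im)
  then have A: "((\<lambda>t. 4 * \<epsilon> / kS * Im (cinner n (chi t) (mvmul n (Z t) (y t - x t)))) has_integral
                  4 * \<epsilon> / kS * (kS / (2 * \<epsilon>) * Re I - L)) {0..T}"
    by (intro has_integral_mult_right) (simp add: mvmul_diff cinner_diff_right)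
  have "((\<lambda>t. Re (braket n (y t) P (y t)) - Re (braket n (x t) P (x t))
                - 2 * Re (cinner n (mvmul n P (x t)) (y t - x t)))
           has_integral (Jy - Jx - 2 * Re I)) {0..T}"
    by (intro has_integral_diff has_integral_mult_right has_integral_Re Jy Jx I)
  moreover have "Re (braket n (y t) P (y t)) - Re (braket n (x t) P (x t))
                   - 2 * Re (cinner n (mvmul n P (x t)) (y t - x t))
                 = Re (cinner n (y t - x t) (mvmul n P (y t - x t)))" for t
    using Re_braket_add[OF adjP, of "x t" "y t - x t"] by simp
  ultimately have B: "((\<lambda>t. Re (cinner n (y t - x t) (mvmul n P (y t - x t)))) has_integral
                        (Jy - Jx - 2 * Re I)) {0..T}"
    by simp
  have E: "4 * \<epsilon> / kS * (kS / (2 * \<epsilon>) * Re I - L) + (Jy - Jx - 2 * Re I) = Jy - Jx - \<epsilon> * (4 / kS) * L"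
    using \<epsilon> kS by (simp add: field_simps)
  from has_integral_add[OF A B] show ?thesis
    unfolding E .
qed

lemma cost_first_order_bound:
  fixes CZ CP X K :: real
  assumes "\<forall>t\<in>{0..T}. \<forall>a<n. \<forall>b<n. cmod (Z t a b) \<le> CZ"
    and "\<forall>a<n. \<forall>b<n. cmod (P a b) \<le> CP"
    and "\<forall>t\<in>{0..T}. \<forall>k<n. cmod (chi t k) \<le> X"
    and "\<forall>t\<in>{0..T}. \<forall>k<n. cmod (y t k - x t k) \<le> \<epsilon> * K"
    and "0 \<le> CZ" "0 \<le> CP" "0 \<le> X" "0 \<le> K"
    and Jy: "((\<lambda>t. Re (braket n (y t) P (y t))) has_integral Jy) {0..T}"
    and Jx: "((\<lambda>t. Re (braket n (x t) P (x t))) has_integral Jx) {0..T}"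
    and L: "((\<lambda>t. Im (cinner n (chi t) (mvmul n (Z t) (x t)))) has_integral L) {0..T}"
  shows "\<epsilon> * (4 / kS) * L - \<epsilon>\<^sup>2 * (T * (4 / kS * (n * X * (n * CZ * K)) + n * K * (n * CP * K)))
           \<le> Jy - Jx"
proof -
  have "- (\<epsilon>\<^sup>2 * (4 / kS * (n * X * (n * CZ * K)) + n * K * (n * CP * K)))
          \<le> 4 * \<epsilon> / kS * Im (cinner n (chi t) (mvmul n (Z t) (y t - x t)))
            + Re (cinner n (y t - x t) (mvmul n P (y t - x t)))"
    if "t \<in> {0..T}" for t
  proof -
    have "cmod (cinner n (chi t) (mvmul n (Z t) (y t - x t))) \<le> n * X * (n * CZ * (\<epsilon> * K))"
      "cmod (cinner n (y t - x t) (mvmul n P (y t - x t))) \<le> n * (\<epsilon> * K) * (n * CP * (\<epsilon> * K))"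
      using that assms \<epsilon> by (auto intro!: norm_cinner_mvmul_le)
    then have "- (n * X * (n * CZ * (\<epsilon> * K))) \<le> Im (cinner n (chi t) (mvmul n (Z t) (y t - x t)))"
      "- (n * (\<epsilon> * K) * (n * CP * (\<epsilon> * K))) \<le> Re (cinner n (y t - x t) (mvmul n P (y t - x t)))"
      using abs_Im_le_cmod abs_Re_le_cmod by (smt (verit))+
    moreover have "4 * \<epsilon> / kS * - (n * X * (n * CZ * (\<epsilon> * K)))
                     \<le> 4 * \<epsilon> / kS * Im (cinner n (chi t) (mvmul n (Z t) (y t - x t)))"
      using calculation(1) \<epsilon> kS by (intro mult_left_mono) auto
    moreover have "4 * \<epsilon> / kS * - (n * X * (n * CZ * (\<epsilon> * K))) = - (\<epsilon>\<^sup>2 * (4 / kS * (n * X * (n * CZ * K))))"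
      "- (n * (\<epsilon> * K) * (n * CP * (\<epsilon> * K))) = - (\<epsilon>\<^sup>2 * (n * K * (n * CP * K)))"
      by (simp_all add: power2_eq_square mult_ac)
    ultimately show ?thesis
      using distrib_left[of "\<epsilon>\<^sup>2" "4 / kS * (n * X * (n * CZ * K))" "n * K * (n * CP * K)"] by linarith
  qed
  from has_integral_le[OF has_integral_const_real has_integral_cost_difference[OF Jy Jx L] this]
  show ?thesis
    using T by (simp add: algebra_simps)
qed

end

section \<open>Admissible controls and the filtered field\<close>

lemma set_borel_measurable_scaleR:
  fixes f :: "'a \<Rightarrow> real" and g :: "'a \<Rightarrow> 'b::euclidean_space"
  assumes "set_borel_measurable M A f" "set_borel_measurable M A g"
  shows "set_borel_measurable M A (\<lambda>x. f x *\<^sub>R g x)"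
proof -
  have "(\<lambda>x. (indicator A x *\<^sub>R f x) *\<^sub>R (indicator A x *\<^sub>R g x)) \<in> borel_measurable M"
    using assms unfolding set_borel_measurable_def by (rule borel_measurable_scaleR)
  moreover have "(\<lambda>x. (indicator A x *\<^sub>R f x) *\<^sub>R (indicator A x *\<^sub>R g x)) = (\<lambda>x. indicator A x *\<^sub>R (f x *\<^sub>R g x))"
    by (auto simp: indicator_def)
  ultimately show ?thesis
    unfolding set_borel_measurable_def by simp
qed

lemma set_borel_measurable_continuous_on_Icc:
  fixes f :: "real \<Rightarrow> 'b::real_normed_vector"
  shows "continuous_on {a..b} f \<Longrightarrow> set_borel_measurable lborel {a..b} f"
  unfolding set_borel_measurable_def by (simp add: borel_measurable_continuous_on_indicator)

lemma set_integrable_Icc_bounded: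
  fixes g :: "real \<Rightarrow> 'b::{banach, second_countable_topology}"
  assumes "set_borel_measurable lborel {a..b} g" "AE t in lborel. t \<in> {a..b} \<longrightarrow> norm (g t) \<le> C"
  shows "set_integrable lborel {a..b} g"
proof (rule set_integrable_bound[OF _ assms(1)])
  show "set_integrable lborel {a..b} (\<lambda>_. C)"
    unfolding set_integrable_def by (rule borel_integrable_compact) auto
  show "AE x in lborel. x \<in> {a..b} \<longrightarrow> norm (g x) \<le> norm C"
    using assms(2) by eventually_elim auto
qed

lemma set_integral_sum:
  fixes f :: "'i \<Rightarrow> real \<Rightarrow> real"
  assumes "\<And>i. i \<in> I \<Longrightarrow> set_integrable lborel S (f i)"
  shows "(LINT t:S|lborel. (\<Sum>i\<in>I. f i t)) = (\<Sum>i\<in>I. LINT t:S|lborel. f i t)"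
  using assms by (simp add: set_integrable_def set_lebesgue_integral_def sum_distrib_left integral_sum)

lemma has_integral_set_integral_continuous:
  fixes f :: "real \<Rightarrow> real"
  assumes "continuous_on {a..b} f"
  shows "(f has_integral (LINT t:{a..b}|lborel. f t)) {a..b}"
proof -
  have "set_integrable lborel {a..b} f"
    unfolding set_integrable_def by (rule borel_integrable_compact) (use assms in auto)
  then show ?thesis
    using set_borel_integral_eq_integral by (metis integrable_integral)
qed

lemma continuous_on_family_bounded:
  fixes f :: "'i \<Rightarrow> 'a::topological_space \<Rightarrow> 'b::real_normed_vector"
  assumes "finite I" "compact S" "\<And>i. i \<in> I \<Longrightarrow> continuous_on S (f i)"
  obtains C where "0 < C" "\<And>i t. i \<in> I \<Longrightarrow> t \<in> S \<Longrightarrow> norm (f i t) \<le> C"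
proof -
  have "compact (\<Union>i\<in>I. f i ` S)"
    using assms by (intro compact_UN compact_continuous_image) auto
  then obtain C where "0 < C" "\<forall>x\<in>(\<Union>i\<in>I. f i ` S). norm x \<le> C"
    using compact_imp_bounded bounded_pos by metis
  then show ?thesis
    using that by blast
qed

lemma continuous_on_matrix_bounded:
  fixes M :: "real \<Rightarrow> cmat"
  assumes "\<forall>a<n1. \<forall>b<n2. continuous_on S (\<lambda>t. M t a b)" "compact S"
  obtains C where "0 \<le> C" "\<forall>t\<in>S. \<forall>a<n1. \<forall>b<n2. cmod (M t a b) \<le> C"
proof -
  obtain C where C: "0 < C" "\<And>i t. i \<in> {..<n1} \<times> {..<n2} \<Longrightarrow> t \<in> S \<Longrightarrow> cmod (M t (fst i) (snd i)) \<le> C"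
    by (rule continuous_on_family_bounded[of "{..<n1} \<times> {..<n2}" S "\<lambda>i t. M t (fst i) (snd i)"])
       (use assms in auto)
  show ?thesis
    by (rule that[of C]) (use C in fastforce)+
qed

definition ess_bounded_on :: "real set \<Rightarrow> (real \<Rightarrow> 'a::euclidean_space) \<Rightarrow> bool" where
  "ess_bounded_on S u \<longleftrightarrow>
     set_borel_measurable lborel S u \<and> (\<exists>B. AE t in lborel. t \<in> S \<longrightarrow> norm (u t) \<le> B)"

lemma Ctrl_ess_bounded_on:
  assumes "u \<in> Ctrl T m M"
  shows "ess_bounded_on {0..T} u"
proof -
  obtain B where "\<forall>x\<in>cbox m M. norm x \<le> B"
    using bounded_cbox bounded_iff by metis
  moreover have "AE t in lborel. t \<in> {0..T} \<longrightarrow> u t \<in> cbox m M"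
    using assms by (simp add: Ctrl_def)
  ultimately have "AE t in lborel. t \<in> {0..T} \<longrightarrow> norm (u t) \<le> B"
    by (auto elim: AE_mp)
  then show ?thesis
    using assms by (auto simp: Ctrl_def ess_bounded_on_def)
qed

lemma ess_bounded_on_diff:
  assumes "ess_bounded_on S u" "ess_bounded_on S w"
  shows "ess_bounded_on S (\<lambda>t. u t - w t)"
proof -
  obtain B B' where "AE t in lborel. t \<in> S \<longrightarrow> norm (u t) \<le> B" "AE t in lborel. t \<in> S \<longrightarrow> norm (w t) \<le> B'"
    using assms by (auto simp: ess_bounded_on_def)
  then have "AE t in lborel. t \<in> S \<longrightarrow> norm (u t - w t) \<le> B + B'"
    by eventually_elim (use norm_triangle_ineq4 in \<open>fastforce intro: order_trans\<close>)
  moreover have "(\<lambda>x. indicator S x *\<^sub>R u x - indicator S x *\<^sub>R w x) \<in> borel_measurable lborel"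
    using assms unfolding ess_bounded_on_def set_borel_measurable_def by (intro borel_measurable_diff) auto
  ultimately show ?thesis
    unfolding ess_bounded_on_def set_borel_measurable_def by (auto simp: scaleR_diff_right)
qed

lemma set_integrable_continuous_scaleR:
  assumes "ess_bounded_on {0..T} u" "continuous_on {0..T} f" "t \<le> T"
  shows "set_integrable lborel {0..t} (\<lambda>\<tau>. f \<tau> *\<^sub>R u \<tau>)"
proof -
  obtain B where B: "AE t in lborel. t \<in> {0..T} \<longrightarrow> norm (u t) \<le> B"
    using assms(1) by (auto simp: ess_bounded_on_def)
  obtain C where C: "0 < C" "\<And>t. t \<in> {0..T} \<Longrightarrow> norm (f t) \<le> C"
    using continuous_on_family_bounded[of "{()}" "{0..T}" "\<lambda>_. f"] assms(2) by auto
  have "AE t in lborel. t \<in> {0..T} \<longrightarrow> norm (f t *\<^sub>R u t) \<le> C * B"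
    using B by eventually_elim (use C in \<open>auto intro: mult_mono\<close>)
  moreover have "set_borel_measurable lborel {0..T} (\<lambda>\<tau>. f \<tau> *\<^sub>R u \<tau>)"
    using set_borel_measurable_scaleR[OF set_borel_measurable_continuous_on_Icc[OF assms(2)]] assms(1)
    unfolding ess_bounded_on_def by blast
  ultimately have "set_integrable lborel {0..T} (\<lambda>\<tau>. f \<tau> *\<^sub>R u \<tau>)"
    by (intro set_integrable_Icc_bounded)
  then show ?thesis
    by (rule set_integrable_subset) (use assms(3) in auto)
qed

lemma Ctrl_convex:
  assumes u: "u \<in> Ctrl T m M" and w: "w \<in> Ctrl T m M" and "0 \<le> \<epsilon>" "\<epsilon> \<le> 1"
  shows "(\<lambda>s. w s + \<epsilon> *\<^sub>R (u s - w s)) \<in> Ctrl T m M"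
proof -
  let ?x = "\<lambda>s. w s + \<epsilon> *\<^sub>R (u s - w s)"
  have "(\<lambda>s. indicator {0..T} s *\<^sub>R u s) \<in> borel_measurable lborel"
    "(\<lambda>s. indicator {0..T} s *\<^sub>R w s) \<in> borel_measurable lborel"
    using u w by (auto simp: Ctrl_def set_borel_measurable_def)
  then have "(\<lambda>s. indicator {0..T} s *\<^sub>R w s + \<epsilon> *\<^sub>R (indicator {0..T} s *\<^sub>R u s - indicator {0..T} s *\<^sub>R w s))
          \<in> borel_measurable lborel"
    by measurable
  then have mx: "set_borel_measurable lborel {0..T} ?x"
    unfolding set_borel_measurable_def by (simp add: algebra_simps)
  have "AE t in lborel. t \<in> {0..T} \<longrightarrow> u t \<in> cbox m M" "AE t in lborel. t \<in> {0..T} \<longrightarrow> w t \<in> cbox m M"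
    using u w by (auto simp: Ctrl_def)
  then have inbox: "AE t in lborel. t \<in> {0..T} \<longrightarrow> ?x t \<in> cbox m M"
  proof eventually_elim
    case (elim t)
    then have "t \<in> {0..T} \<longrightarrow> (1 - \<epsilon>) *\<^sub>R w t + \<epsilon> *\<^sub>R u t \<in> cbox m M"
      using assms by (auto intro!: convexD[OF convex_box(1)])
    then show ?case
      by (simp add: algebra_simps)
  qed
  obtain B where B: "\<forall>x\<in>cbox m M. norm x \<le> B"
    using bounded_cbox bounded_iff by metis
  have "set_borel_measurable lborel {0..T} (\<lambda>t. (norm (?x t))\<^sup>2)"
  proof -
    have "(\<lambda>t. (norm (indicator {0..T} t *\<^sub>R ?x t))\<^sup>2) \<in> borel_measurable lborel"
      using mx unfolding set_borel_measurable_def by measurable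
    moreover have "(\<lambda>t. (norm (indicator {0..T} t *\<^sub>R ?x t))\<^sup>2) = (\<lambda>t. indicator {0..T} t *\<^sub>R (norm (?x t))\<^sup>2)"
      by (auto simp: indicator_def)
    ultimately show ?thesis
      unfolding set_borel_measurable_def by simp
  qed
  moreover have "AE t in lborel. t \<in> {0..T} \<longrightarrow> norm ((norm (?x t))\<^sup>2) \<le> B\<^sup>2"
    using inbox by eventually_elim (use B in \<open>auto intro!: power_mono\<close>)
  ultimately have "set_integrable lborel {0..T} (\<lambda>t. (norm (?x t))\<^sup>2)"
    by (rule set_integrable_Icc_bounded)
  then show ?thesis
    unfolding Ctrl_def using mx inbox by blast
qed

lemma vfilt_eq_integral:
  assumes "ess_bounded_on {0..T} u" "t \<in> {0..T}"
  shows "vfilt \<gamma> v0 u t = exp (- \<gamma> * t) *\<^sub>R (v0 + integral {0..t} (\<lambda>\<tau>. (\<gamma> * exp (\<gamma> * \<tau>)) *\<^sub>R u \<tau>))"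
proof -
  have "set_integrable lborel {0..t} (\<lambda>\<tau>. (\<gamma> * exp (\<gamma> * \<tau>)) *\<^sub>R u \<tau>)"
    using assms by (intro set_integrable_continuous_scaleR[of T]) (auto intro!: continuous_intros)
  then show ?thesis
    unfolding vfilt_def by (simp add: set_borel_integral_eq_integral(2))
qed

lemma continuous_on_vfilt:
  assumes "ess_bounded_on {0..T} u"
  shows "continuous_on {0..T} (vfilt \<gamma> v0 u)"
proof -
  have "set_integrable lborel {0..T} (\<lambda>\<tau>. (\<gamma> * exp (\<gamma> * \<tau>)) *\<^sub>R u \<tau>)"
    using assms by (intro set_integrable_continuous_scaleR) (auto intro!: continuous_intros)
  then have "(\<lambda>\<tau>. (\<gamma> * exp (\<gamma> * \<tau>)) *\<^sub>R u \<tau>) integrable_on {0..T}"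
    by (rule set_borel_integral_eq_integral(1))
  then have "continuous_on {0..T}
               (\<lambda>t. exp (- \<gamma> * t) *\<^sub>R (v0 + integral {0..t} (\<lambda>\<tau>. (\<gamma> * exp (\<gamma> * \<tau>)) *\<^sub>R u \<tau>)))"
    by (intro continuous_intros indefinite_integral_continuous_1)
  then show ?thesis
    by (rule continuous_on_eq) (use vfilt_eq_integral[OF assms] in auto)
qed

lemma vfilt_diff:
  assumes "ess_bounded_on {0..T} u" "ess_bounded_on {0..T} w" "t \<in> {0..T}"
  shows "vfilt \<gamma> v0 u t - vfilt \<gamma> v0 w t
           = exp (- \<gamma> * t) *\<^sub>R (LINT \<tau>:{0..t}|lborel. (\<gamma> * exp (\<gamma> * \<tau>)) *\<^sub>R (u \<tau> - w \<tau>))"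
proof -
  have "set_integrable lborel {0..t} (\<lambda>\<tau>. (\<gamma> * exp (\<gamma> * \<tau>)) *\<^sub>R u \<tau>)"
    "set_integrable lborel {0..t} (\<lambda>\<tau>. (\<gamma> * exp (\<gamma> * \<tau>)) *\<^sub>R w \<tau>)"
    using assms by (auto intro!: set_integrable_continuous_scaleR[of T] continuous_intros)
  then show ?thesis
    unfolding vfilt_def by (simp add: scaleR_diff_right set_integral_diff(2) algebra_simps)
qed

lemma vfilt_convex:
  assumes u: "u \<in> Ctrl T m M" and w: "w \<in> Ctrl T m M" and "0 \<le> \<epsilon>" "\<epsilon> \<le> 1" "t \<in> {0..T}"
  shows "vfilt \<gamma> v0 (\<lambda>s. w s + \<epsilon> *\<^sub>R (u s - w s)) t = vfilt \<gamma> v0 w t + \<epsilon> *\<^sub>R (vfilt \<gamma> v0 u t - vfilt \<gamma> v0 w t)"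
proof -
  have "vfilt \<gamma> v0 (\<lambda>s. w s + \<epsilon> *\<^sub>R (u s - w s)) t - vfilt \<gamma> v0 w t
          = exp (- \<gamma> * t) *\<^sub>R (LINT \<tau>:{0..t}|lborel. \<epsilon> *\<^sub>R ((\<gamma> * exp (\<gamma> * \<tau>)) *\<^sub>R (u \<tau> - w \<tau>)))"
    using vfilt_diff[OF Ctrl_ess_bounded_on[OF Ctrl_convex[OF assms(1-4)]] Ctrl_ess_bounded_on[OF w] assms(5)]
    by (simp add: algebra_simps)
  also have "\<dots> = \<epsilon> *\<^sub>R (exp (- \<gamma> * t) *\<^sub>R (LINT \<tau>:{0..t}|lborel. (\<gamma> * exp (\<gamma> * \<tau>)) *\<^sub>R (u \<tau> - w \<tau>)))"
    by (simp only: set_integral_scaleR_right scaleR_left_commute)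
  also have "\<dots> = \<epsilon> *\<^sub>R (vfilt \<gamma> v0 u t - vfilt \<gamma> v0 w t)"
    using vfilt_diff[OF Ctrl_ess_bounded_on[OF u] Ctrl_ess_bounded_on[OF w] assms(5)] by simp
  finally show ?thesis
    by (simp add: algebra_simps)
qed

section \<open>Exchanging the order of integration\<close>

lemma integrable_lborel_pair_bounded:
  fixes g :: "real \<times> real \<Rightarrow> real"
  assumes "g \<in> borel_measurable (lborel \<Otimes>\<^sub>M lborel)"
    and "AE t in lborel. \<forall>\<tau>. norm (g (t, \<tau>)) \<le> C * indicator ({a..b} \<times> {a..b}) (t, \<tau>)"
  shows "integrable (lborel \<Otimes>\<^sub>M lborel) g"
proof (rule Bochner_Integration.integrable_bound)
  have "emeasure (lborel \<Otimes>\<^sub>M lborel) ({a..b} \<times> {a..b}) = emeasure lborel {a..b} * emeasure lborel {a..b}"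
    by (rule lborel.emeasure_pair_measure_Times) auto
  then have "emeasure (lborel \<Otimes>\<^sub>M lborel) ({a..b} \<times> {a..b}) < \<infinity>"
    by (simp add: ennreal_mult_less_top emeasure_lborel_Icc_eq)
  then have "integrable (lborel \<Otimes>\<^sub>M lborel) (indicator ({a..b} \<times> {a..b}) :: real \<times> real \<Rightarrow> real)"
    by (subst integrable_indicator_iff) auto
  then show "integrable (lborel \<Otimes>\<^sub>M lborel) (\<lambda>x. C * indicator ({a..b} \<times> {a..b}) x)"
    by (rule integrable_mult_right)
  show "AE x in lborel \<Otimes>\<^sub>M lborel. norm (g x) \<le> norm (C * indicator ({a..b} \<times> {a..b}) x)"
  proof (rule lborel_pair.AE_pair_measure)
    show "{x \<in> space (lborel \<Otimes>\<^sub>M lborel). norm (g x) \<le> norm (C * indicator ({a..b} \<times> {a..b}) x)}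
            \<in> sets (lborel \<Otimes>\<^sub>M lborel)"
      using assms(1) by measurable
    show "AE t in lborel. AE \<tau> in lborel. norm (g (t, \<tau>)) \<le> norm (C * indicator ({a..b} \<times> {a..b}) (t, \<tau>))"
      using assms(2) by eventually_elim (auto intro!: AE_I2 order_trans[OF _ abs_ge_self])
  qed
qed (use assms(1) in simp)

text \<open>Integrating out \<open>\<tau>\<close> gives the integrand of \<open>HP\<close>, integrating out \<open>t\<close> gives \<open>F\<close> paired with
  the filtered control (cf. \<open>vfilt_diff\<close>).\<close>

definition triangle_kernel :: "real \<Rightarrow> real \<Rightarrow> (real \<Rightarrow> 'a::euclidean_space) \<Rightarrow> (real \<Rightarrow> 'a) \<Rightarrow> real \<times> real \<Rightarrow> real"
  where "triangle_kernel \<gamma> T F w =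
    (\<lambda>(t, \<tau>). if 0 \<le> t \<and> t \<le> \<tau> \<and> \<tau> \<le> T then \<gamma> * exp (\<gamma> * (t - \<tau>)) * (F \<tau> \<bullet> w t) else 0)"

lemma triangle_kernel_integrable:
  assumes "0 < \<gamma>" "continuous_on {0..T} F" "ess_bounded_on {0..T} w"
  shows "integrable (lborel \<Otimes>\<^sub>M lborel) (triangle_kernel \<gamma> T F w)"
proof -
  have [measurable]: "(\<lambda>x. indicator {0..T} x *\<^sub>R F x) \<in> borel_measurable lborel"
    "(\<lambda>x. indicator {0..T} x *\<^sub>R w x) \<in> borel_measurable lborel"
    using set_borel_measurable_continuous_on_Icc[OF assms(2)] assms(3)
    unfolding set_borel_measurable_def ess_bounded_on_def by auto
  have "triangle_kernel \<gamma> T F w = (\<lambda>(t, \<tau>). of_bool (0 \<le> t \<and> t \<le> \<tau> \<and> \<tau> \<le> T) * (\<gamma> * exp (\<gamma> * (t - \<tau>)))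
          * ((indicator {0..T} \<tau> *\<^sub>R F \<tau>) \<bullet> (indicator {0..T} t *\<^sub>R w t)))"
    by (auto simp: triangle_kernel_def indicator_def fun_eq_iff)
  then have meas: "triangle_kernel \<gamma> T F w \<in> borel_measurable (lborel \<Otimes>\<^sub>M lborel)"
    by (simp only:) measurable
  obtain CF where CF: "0 < CF" "\<And>\<tau>. \<tau> \<in> {0..T} \<Longrightarrow> norm (F \<tau>) \<le> CF"
    using continuous_on_family_bounded[of "{()}" "{0..T}" "\<lambda>_. F"] assms(2) by auto
  obtain B where B: "AE t in lborel. t \<in> {0..T} \<longrightarrow> norm (w t) \<le> B"
    using assms(3) by (auto simp: ess_bounded_on_def)
  have bound: "norm (triangle_kernel \<gamma> T F w (t, \<tau>)) \<le> \<gamma> * (CF * max B 0) * indicator ({0..T} \<times> {0..T}) (t, \<tau>)"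
    if wt: "t \<in> {0..T} \<longrightarrow> norm (w t) \<le> B" for t \<tau>
  proof (cases "0 \<le> t \<and> t \<le> \<tau> \<and> \<tau> \<le> T")
    case True
    have "\<bar>F \<tau> \<bullet> w t\<bar> \<le> norm (F \<tau>) * norm (w t)"
      by (rule Cauchy_Schwarz_ineq2)
    also have "\<dots> \<le> CF * max B 0"
      using CF wt True by (intro mult_mono) auto
    finally have "\<bar>F \<tau> \<bullet> w t\<bar> \<le> CF * max B 0" .
    moreover have "exp (\<gamma> * (t - \<tau>)) \<le> 1"
      using True assms(1) by (simp add: mult_nonneg_nonpos)
    ultimately have "\<gamma> * exp (\<gamma> * (t - \<tau>)) * \<bar>F \<tau> \<bullet> w t\<bar> \<le> \<gamma> * 1 * (CF * max B 0)"
      using assms(1) by (intro mult_mono) auto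
    then show ?thesis
      using True assms(1) by (simp add: triangle_kernel_def abs_mult)
  qed (use CF assms(1) in \<open>auto simp: triangle_kernel_def\<close>)
  have "AE t in lborel. \<forall>\<tau>. norm (triangle_kernel \<gamma> T F w (t, \<tau>))
          \<le> \<gamma> * (CF * max B 0) * indicator ({0..T} \<times> {0..T}) (t, \<tau>)"
    using B by eventually_elim (use bound in blast)
  then show ?thesis
    by (rule integrable_lborel_pair_bounded[OF meas])
qed

lemma triangle_kernel_integral_snd:
  assumes "continuous_on {0..T} F"
  shows "(\<integral>\<tau>. triangle_kernel \<gamma> T F w (t, \<tau>) \<partial>lborel)
           = indicator {0..T} t * ((LINT \<tau>:{t..T}|lborel. (\<gamma> * exp (\<gamma> * (t - \<tau>))) *\<^sub>R F \<tau>) \<bullet> w t)"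
proof (cases "t \<in> {0..T}")
  case True
  define h where "h \<tau> = indicator {t..T} \<tau> *\<^sub>R ((\<gamma> * exp (\<gamma> * (t - \<tau>))) *\<^sub>R F \<tau>)" for \<tau>
  have "(\<lambda>\<tau>. triangle_kernel \<gamma> T F w (t, \<tau>)) = (\<lambda>\<tau>. h \<tau> \<bullet> w t)"
    using True by (auto simp: triangle_kernel_def h_def indicator_def fun_eq_iff)
  then have "(\<integral>\<tau>. triangle_kernel \<gamma> T F w (t, \<tau>) \<partial>lborel) = (\<integral>\<tau>. h \<tau> \<bullet> w t \<partial>lborel)"
    by (simp only:)
  also have "\<dots> = integral\<^sup>L lborel h \<bullet> w t"
    unfolding h_def using True
    by (intro integral_inner_left borel_integrable_compact)
       (auto intro!: continuous_intros continuous_on_subset[OF assms])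
  also have "integral\<^sup>L lborel h = (LINT \<tau>:{t..T}|lborel. (\<gamma> * exp (\<gamma> * (t - \<tau>))) *\<^sub>R F \<tau>)"
    unfolding h_def set_lebesgue_integral_def ..
  finally show ?thesis
    using True by simp
next
  case False
  then have "(\<lambda>\<tau>. triangle_kernel \<gamma> T F w (t, \<tau>)) = (\<lambda>_. 0)"
    by (auto simp: triangle_kernel_def fun_eq_iff)
  then show ?thesis
    using False by simp
qed

lemma triangle_kernel_integral_fst:
  assumes "ess_bounded_on {0..T} w"
  shows "(\<integral>t. triangle_kernel \<gamma> T F w (t, \<tau>) \<partial>lborel)
           = indicator {0..T} \<tau> * (F \<tau> \<bullet> (exp (- \<gamma> * \<tau>) *\<^sub>R (LINT s:{0..\<tau>}|lborel. (\<gamma> * exp (\<gamma> * s)) *\<^sub>R w s)))"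
proof (cases "\<tau> \<in> {0..T}")
  case True
  define h where "h t = indicator {0..\<tau>} t *\<^sub>R ((exp (- \<gamma> * \<tau>) * (\<gamma> * exp (\<gamma> * t))) *\<^sub>R w t)" for t
  have "exp (\<gamma> * (t - \<tau>)) = exp (- \<gamma> * \<tau>) * exp (\<gamma> * t)" for t
    by (simp add: exp_add[symmetric] algebra_simps)
  then have "(\<lambda>t. triangle_kernel \<gamma> T F w (t, \<tau>)) = (\<lambda>t. F \<tau> \<bullet> h t)"
    using True by (auto simp: triangle_kernel_def h_def indicator_def fun_eq_iff)
  then have "(\<integral>t. triangle_kernel \<gamma> T F w (t, \<tau>) \<partial>lborel) = (\<integral>t. F \<tau> \<bullet> h t \<partial>lborel)"
    by (simp only:)
  also have "\<dots> = F \<tau> \<bullet> integral\<^sup>L lborel h"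
  proof (rule integral_inner_right)
    have "set_integrable lborel {0..\<tau>} (\<lambda>t. (exp (- \<gamma> * \<tau>) * (\<gamma> * exp (\<gamma> * t))) *\<^sub>R w t)"
      by (rule set_integrable_continuous_scaleR[OF assms]) (use True in \<open>auto intro!: continuous_intros\<close>)
    then show "integrable lborel h"
      unfolding h_def set_integrable_def .
  qed
  also have "integral\<^sup>L lborel h = exp (- \<gamma> * \<tau>) *\<^sub>R (LINT s:{0..\<tau>}|lborel. (\<gamma> * exp (\<gamma> * s)) *\<^sub>R w s)"
    unfolding h_def set_lebesgue_integral_def[symmetric]
    by (simp only: scaleR_scaleR[symmetric] set_integral_scaleR_right)
  finally show ?thesis
    using True by simp
next
  case False
  then have "(\<lambda>t. triangle_kernel \<gamma> T F w (t, \<tau>)) = (\<lambda>_. 0)"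
    by (auto simp: triangle_kernel_def fun_eq_iff)
  then show ?thesis
    using False by simp
qed

lemma set_integral_triangle_swap:
  assumes "0 < \<gamma>" "continuous_on {0..T} F" "ess_bounded_on {0..T} w"
  shows "set_integrable lborel {0..T} (\<lambda>t. (LINT \<tau>:{t..T}|lborel. (\<gamma> * exp (\<gamma> * (t - \<tau>))) *\<^sub>R F \<tau>) \<bullet> w t)"
    and "(LINT t:{0..T}|lborel. (LINT \<tau>:{t..T}|lborel. (\<gamma> * exp (\<gamma> * (t - \<tau>))) *\<^sub>R F \<tau>) \<bullet> w t)
           = (LINT t:{0..T}|lborel. F t \<bullet> (exp (- \<gamma> * t) *\<^sub>R (LINT \<tau>:{0..t}|lborel. (\<gamma> * exp (\<gamma> * \<tau>)) *\<^sub>R w \<tau>)))"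
proof -
  have int: "integrable (lborel \<Otimes>\<^sub>M lborel) (\<lambda>(t, \<tau>). triangle_kernel \<gamma> T F w (t, \<tau>))"
    using triangle_kernel_integrable[OF assms] by simp
  from lborel_pair.integrable_fst[OF int] show "set_integrable lborel {0..T}
      (\<lambda>t. (LINT \<tau>:{t..T}|lborel. (\<gamma> * exp (\<gamma> * (t - \<tau>))) *\<^sub>R F \<tau>) \<bullet> w t)"
    unfolding set_integrable_def triangle_kernel_integral_snd[OF assms(2)] by simp
  from lborel_pair.Fubini_integral[OF int] show "(LINT t:{0..T}|lborel. (LINT \<tau>:{t..T}|lborel. (\<gamma> * exp (\<gamma> * (t - \<tau>))) *\<^sub>R F \<tau>) \<bullet> w t)
           = (LINT t:{0..T}|lborel. F t \<bullet> (exp (- \<gamma> * t) *\<^sub>R (LINT \<tau>:{0..t}|lborel. (\<gamma> * exp (\<gamma> * \<tau>)) *\<^sub>R w \<tau>)))"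
    unfolding set_lebesgue_integral_def triangle_kernel_integral_snd[OF assms(2)]
      triangle_kernel_integral_fst[OF assms(3)] by simp
qed

lemma HZ_add_scaleR: "HZ p muB g (v + \<epsilon> *\<^sub>R y) a b = HZ p muB g v a b + of_real \<epsilon> * HZ p muB g y a b"
  unfolding HZ_def by (simp add: sum.distrib ring_distribs sum_distrib_left mult_ac)

lemma Hfull_add_scaleR:
  "Hfull p muB g A kS kT (v + \<epsilon> *\<^sub>R y) = (\<lambda>a b. Hfull p muB g A kS kT v a b + of_real \<epsilon> * HZ p muB g y a b)"
  by (simp add: Hfull_def HZ_add_scaleR fun_eq_iff)

lemma continuous_on_HZ: "continuous_on S v \<Longrightarrow> continuous_on S (\<lambda>t. HZ p muB g (v t) a b)"
  unfolding HZ_def by (intro continuous_intros)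

lemma continuous_on_Hfull: "continuous_on S v \<Longrightarrow> continuous_on S (\<lambda>t. Hfull p muB g A kS kT (v t) a b)"
  unfolding Hfull_def by (intro continuous_intros continuous_on_HZ)

definition spin_pairing :: "nat \<Rightarrow> cvec \<Rightarrow> cvec \<Rightarrow> real^3" where
  "spin_pairing p x y = (\<chi> i. Im (braket (ndim p) x (\<lambda>a b. S1 p i a b + S2 p i a b) y))"

lemma Im_cinner_HZ:
  "Im (cinner (ndim p) x (mvmul (ndim p) (HZ p muB g v) y)) = muB * g * (spin_pairing p x y \<bullet> v)"
proof -
  have "braket (ndim p) x (HZ p muB g v) y
          = of_real (muB * g) * (\<Sum>i\<in>UNIV. of_real (v $ i) * braket (ndim p) x (\<lambda>a b. S1 p i a b + S2 p i a b) y)"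
    unfolding HZ_def braket_def
    by (simp add: sum_distrib_left sum_distrib_right mult_ac sum.swap[of _ UNIV])
  then show ?thesis
    unfolding braket_eq_cinner[symmetric] spin_pairing_def
    by (simp add: inner_vec_def Im_sum mult_ac sum_distrib_left)
qed

lemma continuous_on_spin_pairing:
  assumes "\<And>k. k < ndim p \<Longrightarrow> continuous_on S (\<lambda>t. x t k)" "\<And>k. k < ndim p \<Longrightarrow> continuous_on S (\<lambda>t. y t k)"
  shows "continuous_on S (\<lambda>t. spin_pairing p (x t) (y t))"
  unfolding spin_pairing_def by (intro continuous_on_vec_lambda continuous_intros continuous_on_braket assms)

lemma HP_eq_spin_pairing:
  "HP p T muB g gamma psi w chi t =
     muB * g / (3 * 2 powr (real p - 1)) *
       (\<Sum>l < 3 * 2 ^ p. (LINT \<tau>:{t..T}|lborel. (gamma * exp (gamma * (t - \<tau>))) *\<^sub>R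
          spin_pairing p (chi l \<tau>) (psi l \<tau>)) \<bullet> w)"
  unfolding HP_def spin_pairing_def by (simp add: inner_sum_left)

section \<open>The maximum principle\<close>

lemma nonpos_if_le_eps_mult:
  fixes A B :: real
  assumes "\<And>\<epsilon>. 0 < \<epsilon> \<Longrightarrow> \<epsilon> \<le> 1 \<Longrightarrow> A \<le> \<epsilon> * B"
  shows "A \<le> 0"
proof (rule field_le_epsilon)
  fix e :: real
  assume "0 < e"
  define \<epsilon> where "\<epsilon> = min 1 (e / (\<bar>B\<bar> + 1))"
  have \<epsilon>: "0 < \<epsilon>" "\<epsilon> \<le> 1" "\<epsilon> \<le> e / (\<bar>B\<bar> + 1)"
    using \<open>0 < e\<close> by (auto simp: \<epsilon>_def)
  have "A \<le> \<epsilon> * B"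
    using assms \<epsilon>(1,2) by blast
  also have "\<dots> \<le> \<epsilon> * \<bar>B\<bar>"
    using \<epsilon>(1) by (intro mult_left_mono) auto
  also have "\<dots> \<le> e / (\<bar>B\<bar> + 1) * \<bar>B\<bar>"
    using \<epsilon>(3) by (intro mult_right_mono) auto
  also have "\<dots> \<le> e"
    using \<open>0 < e\<close> by (simp add: field_simps)
  finally show "A \<le> 0 + e"
    by simp
qed

locale radical_pair_control =
  fixes p :: nat and T hbar muB g kS kT gamma :: real and v0 m M :: "real^3"
    and A :: "nat \<Rightarrow> real^3" and psi chi :: "(real \<Rightarrow> real^3) \<Rightarrow> nat \<Rightarrow> real \<Rightarrow> cvec"
  assumes T_pos: "0 < T" and hbar_pos: "0 < hbar" and kS_pos: "0 < kS" and gamma_pos: "0 < gamma"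
    and psi_sol: "\<forall>u \<in> Ctrl T m M. \<forall>l < 3 * 2 ^ p.
          is_psi_sol p T hbar muB g A kS kT (vfilt gamma v0 u) (psiT p l) (psi u l)"
    and chi_sol: "\<forall>u \<in> Ctrl T m M. \<forall>l < 3 * 2 ^ p.
          is_chi_sol p T hbar muB g A kS kT (vfilt gamma v0 u) (psi u l) (chi u l)"
begin

lemma psi_has_derivative:
  assumes "u \<in> Ctrl T m M" "l < 3 * 2 ^ p" "t \<in> {0..T}" "k < ndim p"
  shows "((\<lambda>s. psi u l s k) has_vector_derivative
           mvmul (ndim p) (Hfull p muB g A kS kT (vfilt gamma v0 u t)) (psi u l t) k / (\<i> * of_real hbar))
           (at t within {0..T})"
  using psi_sol assms unfolding is_psi_sol_def by blast

lemma psi_initial: "u \<in> Ctrl T m M \<Longrightarrow> l < 3 * 2 ^ p \<Longrightarrow> k < ndim p \<Longrightarrow> psi u l 0 k = psiT p l k"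
  using psi_sol unfolding is_psi_sol_def by blast

lemma continuous_on_psi:
  "u \<in> Ctrl T m M \<Longrightarrow> l < 3 * 2 ^ p \<Longrightarrow> k < ndim p \<Longrightarrow> continuous_on {0..T} (\<lambda>t. psi u l t k)"
  by (rule continuous_on_vector_derivative) (rule psi_has_derivative)

lemma chi_final: "u \<in> Ctrl T m M \<Longrightarrow> l < 3 * 2 ^ p \<Longrightarrow> k < ndim p \<Longrightarrow> chi u l T k = 0"
  using chi_sol unfolding is_chi_sol_def by blast

lemma continuous_on_chi:
  "u \<in> Ctrl T m M \<Longrightarrow> l < 3 * 2 ^ p \<Longrightarrow> k < ndim p \<Longrightarrow> continuous_on {0..T} (\<lambda>t. chi u l t k)"
  using chi_sol unfolding is_chi_sol_def by blast

lemma chi_has_derivative: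
  assumes "u \<in> Ctrl T m M" "l < 3 * 2 ^ p" "t \<in> {0..<T}" "k < ndim p"
  shows "((\<lambda>s. chi u l s k) has_vector_derivative
           (mvmul (ndim p) (Hstar p muB g A kS kT (vfilt gamma v0 u t)) (chi u l t) k
            - \<i> * of_real (kS / 2) * mvmul (ndim p) (PS p) (psi u l t) k) / (\<i> * of_real hbar))
           (at t within {0..T})"
  using chi_sol assms unfolding is_chi_sol_def by blast

lemma continuous_on_spin_pairing_sol:
  "u \<in> Ctrl T m M \<Longrightarrow> l < 3 * 2 ^ p \<Longrightarrow> continuous_on {0..T} (\<lambda>t. spin_pairing p (chi u l t) (psi u l t))"
  by (intro continuous_on_spin_pairing continuous_on_psi continuous_on_chi)

definition state_cost :: "(real \<Rightarrow> real^3) \<Rightarrow> nat \<Rightarrow> real" where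
  "state_cost u l = (LINT t:{0..T}|lborel. Re (braket (ndim p) (psi u l t) (PS p) (psi u l t)))"

definition field_variation :: "(real \<Rightarrow> real^3) \<Rightarrow> (real \<Rightarrow> real^3) \<Rightarrow> nat \<Rightarrow> real" where
  "field_variation u w l = (LINT t:{0..T}|lborel.
     spin_pairing p (chi w l t) (psi w l t) \<bullet> (vfilt gamma v0 u t - vfilt gamma v0 w t))"

lemma Jcost_eq_sum_state_cost: "Jcost p T kS (psi u) = kS / (3 * 2 ^ (p + 1)) * (\<Sum>l < 3 * 2 ^ p. state_cost u l)"
  unfolding Jcost_def state_cost_def ..

lemma set_integral_HP:
  assumes "w \<in> Ctrl T m M" "ess_bounded_on {0..T} x"
  shows "(LINT t:{0..T}|lborel. HP p T muB g gamma (psi w) (x t) (chi w) t)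
           = muB * g / (3 * 2 powr (real p - 1)) * (\<Sum>l < 3 * 2 ^ p. LINT t:{0..T}|lborel.
               (LINT \<tau>:{t..T}|lborel. (gamma * exp (gamma * (t - \<tau>))) *\<^sub>R spin_pairing p (chi w l \<tau>) (psi w l \<tau>)) \<bullet> x t)"
  unfolding HP_eq_spin_pairing set_integral_mult_right
  by (intro arg_cong[where f = "times _"] set_integral_sum set_integral_triangle_swap(1)
        gamma_pos continuous_on_spin_pairing_sol assms) auto

lemma HP_integral_diff:
  assumes u: "u \<in> Ctrl T m M" and w: "w \<in> Ctrl T m M"
  shows "(LINT t:{0..T}|lborel. HP p T muB g gamma (psi w) (u t) (chi w) t)
           - (LINT t:{0..T}|lborel. HP p T muB g gamma (psi w) (w t) (chi w) t)
         = muB * g / (3 * 2 powr (real p - 1)) * (\<Sum>l < 3 * 2 ^ p. field_variation u w l)"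
proof -
  have bdd: "ess_bounded_on {0..T} u" "ess_bounded_on {0..T} w" "ess_bounded_on {0..T} (\<lambda>t. u t - w t)"
    using u w by (simp_all add: Ctrl_ess_bounded_on ess_bounded_on_diff)
  define G where "G l t = (LINT \<tau>:{t..T}|lborel. (gamma * exp (gamma * (t - \<tau>))) *\<^sub>R spin_pairing p (chi w l \<tau>) (psi w l \<tau>))"
    for l t
  have int: "set_integrable lborel {0..T} (\<lambda>t. G l t \<bullet> x t)" if "l < 3 * 2 ^ p" "ess_bounded_on {0..T} x" for l x
    unfolding G_def using that w by (intro set_integral_triangle_swap(1) gamma_pos continuous_on_spin_pairing_sol)
  have "(LINT t:{0..T}|lborel. G l t \<bullet> u t) - (LINT t:{0..T}|lborel. G l t \<bullet> w t) = field_variation u w l"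
    if l: "l < 3 * 2 ^ p" for l
  proof -
    have "(LINT t:{0..T}|lborel. G l t \<bullet> u t) - (LINT t:{0..T}|lborel. G l t \<bullet> w t)
            = (LINT t:{0..T}|lborel. G l t \<bullet> (u t - w t))"
      using int[OF l bdd(1)] int[OF l bdd(2)] by (simp add: inner_diff_right set_integral_diff(2))
    also have "\<dots> = (LINT t:{0..T}|lborel. spin_pairing p (chi w l t) (psi w l t) \<bullet>
                       (exp (- gamma * t) *\<^sub>R (LINT \<tau>:{0..t}|lborel. (gamma * exp (gamma * \<tau>)) *\<^sub>R (u \<tau> - w \<tau>))))"
      unfolding G_def using l w bdd(3)
      by (intro set_integral_triangle_swap(2) gamma_pos continuous_on_spin_pairing_sol)
    also have "\<dots> = field_variation u w l"
      unfolding field_variation_def using vfilt_diff[OF bdd(1,2)] by (intro set_lebesgue_integral_cong) auto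
    finally show ?thesis .
  qed
  then have "(\<Sum>l < 3 * 2 ^ p. field_variation u w l)
      = (\<Sum>l < 3 * 2 ^ p. LINT t:{0..T}|lborel. G l t \<bullet> u t) - (\<Sum>l < 3 * 2 ^ p. LINT t:{0..T}|lborel. G l t \<bullet> w t)"
    by (simp add: sum_subtractf[symmetric])
  then show ?thesis
    unfolding set_integral_HP[OF w bdd(1)] set_integral_HP[OF w bdd(2)] G_def[symmetric]
    by (simp add: right_diff_distrib)
qed

lemma uniform_bounds:
  assumes u: "u \<in> Ctrl T m M" and w: "w \<in> Ctrl T m M"
  obtains CH CZ CP Psi X where "0 \<le> CH" "0 \<le> CZ" "0 \<le> CP" "0 \<le> Psi" "0 \<le> X"
    "\<forall>t\<in>{0..T}. \<forall>a<ndim p. \<forall>b<ndim p. cmod (Hfull p muB g A kS kT (vfilt gamma v0 w t) a b) \<le> CH"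
    "\<forall>t\<in>{0..T}. \<forall>a<ndim p. \<forall>b<ndim p. cmod (HZ p muB g (vfilt gamma v0 u t - vfilt gamma v0 w t) a b) \<le> CZ"
    "\<forall>a<ndim p. \<forall>b<ndim p. cmod (PS p a b) \<le> CP"
    "\<forall>t\<in>{0..T}. \<forall>l<3 * 2 ^ p. \<forall>k<ndim p. cmod (psi w l t k) \<le> Psi"
    "\<forall>t\<in>{0..T}. \<forall>l<3 * 2 ^ p. \<forall>k<ndim p. cmod (chi w l t k) \<le> X"
proof -
  have vc: "continuous_on {0..T} (vfilt gamma v0 w)" "continuous_on {0..T} (\<lambda>t. vfilt gamma v0 u t - vfilt gamma v0 w t)"
    using u w by (auto intro!: continuous_on_diff continuous_on_vfilt Ctrl_ess_bounded_on)
  obtain CH where CH: "0 \<le> CH"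
    "\<forall>t\<in>{0..T}. \<forall>a<ndim p. \<forall>b<ndim p. cmod (Hfull p muB g A kS kT (vfilt gamma v0 w t) a b) \<le> CH"
    using continuous_on_matrix_bounded[of "ndim p" "ndim p" "{0..T}" "\<lambda>t. Hfull p muB g A kS kT (vfilt gamma v0 w t)"]
      continuous_on_Hfull[OF vc(1)] by auto
  obtain CZ where CZ: "0 \<le> CZ"
    "\<forall>t\<in>{0..T}. \<forall>a<ndim p. \<forall>b<ndim p. cmod (HZ p muB g (vfilt gamma v0 u t - vfilt gamma v0 w t) a b) \<le> CZ"
    using continuous_on_matrix_bounded[of "ndim p" "ndim p" "{0..T}" "\<lambda>t. HZ p muB g (vfilt gamma v0 u t - vfilt gamma v0 w t)"]
      continuous_on_HZ[OF vc(2)] by auto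
  obtain CP where CP: "0 \<le> CP" "\<forall>t\<in>{0..T}. \<forall>a<ndim p. \<forall>b<ndim p. cmod (PS p a b) \<le> CP"
    using continuous_on_matrix_bounded[of "ndim p" "ndim p" "{0..T}" "\<lambda>_. PS p"] by auto
  obtain Psi where Psi: "0 \<le> Psi" "\<forall>t\<in>{0..T}. \<forall>l<3 * 2 ^ p. \<forall>k<ndim p. cmod (psi w l t k) \<le> Psi"
    using continuous_on_matrix_bounded[of "3 * 2 ^ p" "ndim p" "{0..T}" "\<lambda>t l k. psi w l t k"] continuous_on_psi[OF w] by auto
  obtain X where X: "0 \<le> X" "\<forall>t\<in>{0..T}. \<forall>l<3 * 2 ^ p. \<forall>k<ndim p. cmod (chi w l t k) \<le> X"
    using continuous_on_matrix_bounded[of "3 * 2 ^ p" "ndim p" "{0..T}" "\<lambda>t l k. chi w l t k"] continuous_on_chi[OF w] by auto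
  have "\<forall>a<ndim p. \<forall>b<ndim p. cmod (PS p a b) \<le> CP"
    using CP(2) T_pos by auto
  from that[OF CH(1) CZ(1) CP(1) Psi(1) X(1) CH(2) CZ(2) this Psi(2) X(2)] show ?thesis .
qed

lemma psi_segment_has_derivative:
  assumes u: "u \<in> Ctrl T m M" and w: "w \<in> Ctrl T m M" and "0 \<le> \<epsilon>" "\<epsilon> \<le> 1"
    and "l < 3 * 2 ^ p" "t \<in> {0..T}" "k < ndim p"
  shows "((\<lambda>s. psi (\<lambda>s. w s + \<epsilon> *\<^sub>R (u s - w s)) l s k) has_vector_derivative
           mvmul (ndim p) (\<lambda>a b. Hfull p muB g A kS kT (vfilt gamma v0 w t) a b
                                + of_real \<epsilon> * HZ p muB g (vfilt gamma v0 u t - vfilt gamma v0 w t) a b)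
             (psi (\<lambda>s. w s + \<epsilon> *\<^sub>R (u s - w s)) l t) k / (\<i> * of_real hbar)) (at t within {0..T})"
  using psi_has_derivative[OF Ctrl_convex[OF u w assms(3,4)] assms(5-7)]
  by (simp add: vfilt_convex[OF assms(1-4,6)] Hfull_add_scaleR)

lemma psi_segment_close:
  fixes CH CZ Psi :: real
  assumes u: "u \<in> Ctrl T m M" and w: "w \<in> Ctrl T m M" and \<epsilon>: "0 \<le> \<epsilon>" "\<epsilon> \<le> 1" and l: "l < 3 * 2 ^ p"
    and "0 \<le> CH" "0 \<le> CZ" "0 \<le> Psi"
    and CH: "\<forall>t\<in>{0..T}. \<forall>a<ndim p. \<forall>b<ndim p. cmod (Hfull p muB g A kS kT (vfilt gamma v0 w t) a b) \<le> CH"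
    and CZ: "\<forall>t\<in>{0..T}. \<forall>a<ndim p. \<forall>b<ndim p. cmod (HZ p muB g (vfilt gamma v0 u t - vfilt gamma v0 w t) a b) \<le> CZ"
    and Psi: "\<forall>t\<in>{0..T}. \<forall>k<ndim p. cmod (psi w l t k) \<le> Psi"
    and "t \<in> {0..T}" "k < ndim p"
  shows "cmod (psi (\<lambda>s. w s + \<epsilon> *\<^sub>R (u s - w s)) l t k - psi w l t k)
           \<le> \<epsilon> * perturbation_const (ndim p) T hbar (CH + CZ) (real (ndim p) * CZ * Psi)"
proof -
  define ue where "ue = (\<lambda>s. w s + \<epsilon> *\<^sub>R (u s - w s))"
  define H where "H t = (\<lambda>a b. Hfull p muB g A kS kT (vfilt gamma v0 w t) a b
                                + of_real \<epsilon> * HZ p muB g (vfilt gamma v0 u t - vfilt gamma v0 w t) a b)" for t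
  define f where "f t = mvmul (ndim p) (HZ p muB g (vfilt gamma v0 u t - vfilt gamma v0 w t)) (psi w l t)" for t
  have dD: "\<forall>t\<in>{0..T}. \<forall>k<ndim p. ((\<lambda>s. (psi ue l s - psi w l s) k) has_vector_derivative
          (mvmul (ndim p) (H t) (psi ue l t - psi w l t) k + of_real \<epsilon> * f t k) / (\<i> * of_real hbar))
          (at t within {0..T})"
    using has_vector_derivative_perturbation(1)[OF psi_has_derivative[OF w l] psi_segment_has_derivative[OF u w \<epsilon> l]]
    unfolding ue_def H_def f_def by simp
  have D0: "\<forall>k<ndim p. (psi ue l 0 - psi w l 0) k = 0"
    using psi_initial[OF Ctrl_convex[OF u w \<epsilon>] l] psi_initial[OF w l] by (simp add: ue_def)
  have bH: "\<forall>t\<in>{0..T}. \<forall>a<ndim p. \<forall>b<ndim p. cmod (H t a b) \<le> CH + CZ"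
  proof (intro ballI allI impI)
    fix t a b
    assume "t \<in> {0..T}" "a < ndim p" "b < ndim p"
    then have "cmod (HZ p muB g (vfilt gamma v0 u t - vfilt gamma v0 w t) a b) \<le> CZ"
      "cmod (Hfull p muB g A kS kT (vfilt gamma v0 w t) a b) \<le> CH"
      using CZ CH by auto
    moreover have "cmod (of_real \<epsilon> * HZ p muB g (vfilt gamma v0 u t - vfilt gamma v0 w t) a b)
                     \<le> cmod (HZ p muB g (vfilt gamma v0 u t - vfilt gamma v0 w t) a b)"
      using \<epsilon> by (simp add: norm_mult mult_left_le_one_le)
    ultimately show "cmod (H t a b) \<le> CH + CZ"
      unfolding H_def by (smt (verit) norm_triangle_ineq)
  qed
  have bf: "\<forall>t\<in>{0..T}. \<forall>k<ndim p. cmod (f t k) \<le> real (ndim p) * CZ * Psi"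
    unfolding f_def using CZ Psi \<open>0 \<le> CZ\<close> by (auto intro!: norm_mvmul_le)
  have "0 \<le> CH + CZ" "0 \<le> real (ndim p) * CZ * Psi"
    using assms by simp_all
  from perturbation_bound[OF hbar_pos \<epsilon>(1) this dD D0 bH bf \<open>t \<in> {0..T}\<close> \<open>k < ndim p\<close>]
  show ?thesis
    by (simp add: ue_def)
qed

lemma has_integral_state_cost:
  "u \<in> Ctrl T m M \<Longrightarrow> l < 3 * 2 ^ p \<Longrightarrow>
     ((\<lambda>t. Re (braket (ndim p) (psi u l t) (PS p) (psi u l t))) has_integral state_cost u l) {0..T}"
  unfolding state_cost_def
  by (intro has_integral_set_integral_continuous continuous_intros continuous_on_braket continuous_on_psi)

lemma has_integral_field_variation:
  assumes "u \<in> Ctrl T m M" "w \<in> Ctrl T m M" "l < 3 * 2 ^ p"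
  shows "((\<lambda>t. Im (cinner (ndim p) (chi w l t)
            (mvmul (ndim p) (HZ p muB g (vfilt gamma v0 u t - vfilt gamma v0 w t)) (psi w l t))))
          has_integral muB * g * field_variation u w l) {0..T}"
  unfolding Im_cinner_HZ field_variation_def set_integral_mult_right[symmetric] using assms
  by (intro has_integral_set_integral_continuous continuous_intros continuous_on_spin_pairing_sol
      continuous_on_vfilt Ctrl_ess_bounded_on)

lemma state_cost_variation:
  fixes CZ CP X K :: real
  assumes u: "u \<in> Ctrl T m M" and w: "w \<in> Ctrl T m M" and \<epsilon>: "0 < \<epsilon>" "\<epsilon> \<le> 1" and l: "l < 3 * 2 ^ p"
    and "0 \<le> CZ" "0 \<le> CP" "0 \<le> X" "0 \<le> K"
    and CZ: "\<forall>t\<in>{0..T}. \<forall>a<ndim p. \<forall>b<ndim p. cmod (HZ p muB g (vfilt gamma v0 u t - vfilt gamma v0 w t) a b) \<le> CZ"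
    and CP: "\<forall>a<ndim p. \<forall>b<ndim p. cmod (PS p a b) \<le> CP"
    and X: "\<forall>t\<in>{0..T}. \<forall>k<ndim p. cmod (chi w l t k) \<le> X"
    and close: "\<forall>t\<in>{0..T}. \<forall>k<ndim p. cmod (psi (\<lambda>s. w s + \<epsilon> *\<^sub>R (u s - w s)) l t k - psi w l t k) \<le> \<epsilon> * K"
  shows "\<epsilon> * (4 / kS) * (muB * g * field_variation u w l)
           - \<epsilon>\<^sup>2 * (T * (4 / kS * (ndim p * X * (ndim p * CZ * K)) + ndim p * K * (ndim p * CP * K)))
         \<le> state_cost (\<lambda>s. w s + \<epsilon> *\<^sub>R (u s - w s)) l - state_cost w l"
proof -
  have "0 \<le> \<epsilon>"
    using \<epsilon> by simp
  have ue: "(\<lambda>s. w s + \<epsilon> *\<^sub>R (u s - w s)) \<in> Ctrl T m M"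
    using Ctrl_convex[OF u w \<open>0 \<le> \<epsilon>\<close> \<epsilon>(2)] .
  have dx: "\<forall>t\<in>{0..T}. \<forall>k<ndim p. ((\<lambda>s. psi w l s k) has_vector_derivative
      mvmul (ndim p) (Hfull p muB g A kS kT (vfilt gamma v0 w t)) (psi w l t) k / (\<i> * of_real hbar)) (at t within {0..T})"
    using psi_has_derivative[OF w l] by blast
  have dy: "\<forall>t\<in>{0..T}. \<forall>k<ndim p. ((\<lambda>s. psi (\<lambda>s. w s + \<epsilon> *\<^sub>R (u s - w s)) l s k) has_vector_derivative
      mvmul (ndim p) (\<lambda>a b. Hfull p muB g A kS kT (vfilt gamma v0 w t) a b
                           + of_real \<epsilon> * HZ p muB g (vfilt gamma v0 u t - vfilt gamma v0 w t) a b)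
        (psi (\<lambda>s. w s + \<epsilon> *\<^sub>R (u s - w s)) l t) k / (\<i> * of_real hbar)) (at t within {0..T})"
    using psi_segment_has_derivative[OF u w \<open>0 \<le> \<epsilon>\<close> \<epsilon>(2) l] by blast
  have init: "\<forall>k<ndim p. psi (\<lambda>s. w s + \<epsilon> *\<^sub>R (u s - w s)) l 0 k = psi w l 0 k"
    using psi_initial[OF ue l] psi_initial[OF w l] by simp
  have dchi: "\<forall>t\<in>{0..<T}. \<forall>k<ndim p. ((\<lambda>s. chi w l s k) has_vector_derivative
      (mvmul (ndim p) (Hstar p muB g A kS kT (vfilt gamma v0 w t)) (chi w l t) k
       - \<i> * of_real (kS / 2) * mvmul (ndim p) (PS p) (psi w l t) k) / (\<i> * of_real hbar)) (at t within {0..T})"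
    using chi_has_derivative[OF w l] by blast
  have "\<forall>t\<in>{0..T}. \<forall>a<ndim p. \<forall>b<ndim p. cnj (Hstar p muB g A kS kT (vfilt gamma v0 w t) b a)
          = Hfull p muB g A kS kT (vfilt gamma v0 w t) a b"
    "\<forall>a<ndim p. \<forall>b<ndim p. cnj (PS p b a) = PS p a b"
    using cnj_Hstar hermitian_PS by (auto simp: hermitian_def)
  from cost_first_order_bound[OF T_pos hbar_pos kS_pos \<epsilon>(1) dx dy init _ _ dchi this CZ CP X close
      \<open>0 \<le> CZ\<close> \<open>0 \<le> CP\<close> \<open>0 \<le> X\<close> \<open>0 \<le> K\<close> has_integral_state_cost[OF ue l] has_integral_state_cost[OF w l]
      has_integral_field_variation[OF u w l]]
  show ?thesis
    using chi_final[OF w l] continuous_on_chi[OF w l] by blast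
qed

lemma state_cost_second_order:
  assumes u: "u \<in> Ctrl T m M" and w: "w \<in> Ctrl T m M"
  obtains Q where "\<And>\<epsilon> l. 0 < \<epsilon> \<Longrightarrow> \<epsilon> \<le> 1 \<Longrightarrow> l < 3 * 2 ^ p \<Longrightarrow>
    \<epsilon> * (4 / kS) * (muB * g * field_variation u w l) - \<epsilon>\<^sup>2 * Q
      \<le> state_cost (\<lambda>s. w s + \<epsilon> *\<^sub>R (u s - w s)) l - state_cost w l"
proof -
  obtain CH CZ CP Psi X where nonneg: "0 \<le> CH" "0 \<le> CZ" "0 \<le> CP" "0 \<le> Psi" "0 \<le> X"
    and CH: "\<forall>t\<in>{0..T}. \<forall>a<ndim p. \<forall>b<ndim p. cmod (Hfull p muB g A kS kT (vfilt gamma v0 w t) a b) \<le> CH"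
    and CZ: "\<forall>t\<in>{0..T}. \<forall>a<ndim p. \<forall>b<ndim p. cmod (HZ p muB g (vfilt gamma v0 u t - vfilt gamma v0 w t) a b) \<le> CZ"
    and CP: "\<forall>a<ndim p. \<forall>b<ndim p. cmod (PS p a b) \<le> CP"
    and Psi: "\<forall>t\<in>{0..T}. \<forall>l<3 * 2 ^ p. \<forall>k<ndim p. cmod (psi w l t k) \<le> Psi"
    and X: "\<forall>t\<in>{0..T}. \<forall>l<3 * 2 ^ p. \<forall>k<ndim p. cmod (chi w l t k) \<le> X"
    using uniform_bounds[OF u w] by blast
  define K where "K = perturbation_const (ndim p) T hbar (CH + CZ) (real (ndim p) * CZ * Psi)"
  have "0 \<le> K"
    unfolding K_def using T_pos by (simp add: perturbation_const_nonneg)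
  show ?thesis
  proof (rule that[of "T * (4 / kS * (ndim p * X * (ndim p * CZ * K)) + ndim p * K * (ndim p * CP * K))"])
    fix \<epsilon> :: real and l :: nat
    assume \<epsilon>: "0 < \<epsilon>" "\<epsilon> \<le> 1" and l: "l < 3 * 2 ^ p"
    have "\<forall>t\<in>{0..T}. \<forall>k<ndim p. cmod (chi w l t k) \<le> X"
      using X l by blast
    moreover have "\<forall>t\<in>{0..T}. \<forall>k<ndim p. cmod (psi (\<lambda>s. w s + \<epsilon> *\<^sub>R (u s - w s)) l t k - psi w l t k) \<le> \<epsilon> * K"
    proof (intro ballI allI impI)
      fix t k
      assume "t \<in> {0..T}" "k < ndim p"
      moreover have "\<forall>t\<in>{0..T}. \<forall>k<ndim p. cmod (psi w l t k) \<le> Psi"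
        using Psi l by blast
      ultimately show "cmod (psi (\<lambda>s. w s + \<epsilon> *\<^sub>R (u s - w s)) l t k - psi w l t k) \<le> \<epsilon> * K"
        unfolding K_def using \<epsilon> by (intro psi_segment_close[OF u w _ _ l nonneg(1,2,4) CH CZ]) auto
    qed
    ultimately show "\<epsilon> * (4 / kS) * (muB * g * field_variation u w l)
        - \<epsilon>\<^sup>2 * (T * (4 / kS * (ndim p * X * (ndim p * CZ * K)) + ndim p * K * (ndim p * CP * K)))
      \<le> state_cost (\<lambda>s. w s + \<epsilon> *\<^sub>R (u s - w s)) l - state_cost w l"
      by (rule state_cost_variation[OF u w \<epsilon> l nonneg(2,3,5) \<open>0 \<le> K\<close> CZ CP])
  qed
qed

lemma sum_state_cost_le_optimal:
  assumes "w \<in> Ctrl T m M" and "\<forall>u \<in> Ctrl T m M. Jcost p T kS (psi u) \<le> Jcost p T kS (psi ustar)"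
  shows "(\<Sum>l < 3 * 2 ^ p. state_cost w l) \<le> (\<Sum>l < 3 * 2 ^ p. state_cost ustar l)"
proof (rule mult_left_le_imp_le)
  show "kS / (3 * 2 ^ (p + 1)) * (\<Sum>l < 3 * 2 ^ p. state_cost w l)
          \<le> kS / (3 * 2 ^ (p + 1)) * (\<Sum>l < 3 * 2 ^ p. state_cost ustar l)"
    using assms by (simp only: Jcost_eq_sum_state_cost[symmetric])
  show "0 < kS / (3 * 2 ^ (p + 1))"
    using kS_pos by simp
qed

lemma optimal_field_variation_nonpos:
  assumes u: "u \<in> Ctrl T m M" and us: "ustar \<in> Ctrl T m M"
    and opt: "\<forall>u \<in> Ctrl T m M. Jcost p T kS (psi u) \<le> Jcost p T kS (psi ustar)"
  shows "muB * g * (\<Sum>l < 3 * 2 ^ p. field_variation u ustar l) \<le> 0"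
proof -
  obtain Q where Q: "\<And>\<epsilon> l. 0 < \<epsilon> \<Longrightarrow> \<epsilon> \<le> 1 \<Longrightarrow> l < 3 * 2 ^ p \<Longrightarrow>
      \<epsilon> * (4 / kS) * (muB * g * field_variation u ustar l) - \<epsilon>\<^sup>2 * Q
        \<le> state_cost (\<lambda>s. ustar s + \<epsilon> *\<^sub>R (u s - ustar s)) l - state_cost ustar l"
    using state_cost_second_order[OF u us] by blast
  have "4 / kS * (muB * g * (\<Sum>l < 3 * 2 ^ p. field_variation u ustar l)) \<le> \<epsilon> * (3 * 2 ^ p * Q)"
    if \<epsilon>: "0 < \<epsilon>" "\<epsilon> \<le> 1" for \<epsilon>
  proof -
    have "(\<Sum>l < 3 * 2 ^ p. \<epsilon> * (4 / kS) * (muB * g * field_variation u ustar l) - \<epsilon>\<^sup>2 * Q)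
            \<le> (\<Sum>l < 3 * 2 ^ p. state_cost (\<lambda>s. ustar s + \<epsilon> *\<^sub>R (u s - ustar s)) l)
              - (\<Sum>l < 3 * 2 ^ p. state_cost ustar l)"
      unfolding sum_subtractf[symmetric] using Q \<epsilon> by (intro sum_mono) auto
    also have "\<dots> \<le> 0"
      using sum_state_cost_le_optimal[OF Ctrl_convex[OF u us] opt] \<epsilon> by simp
    finally have "\<epsilon> * (4 / kS * (muB * g * (\<Sum>l < 3 * 2 ^ p. field_variation u ustar l)))
                    \<le> \<epsilon> * (\<epsilon> * (3 * 2 ^ p * Q))"
      by (simp add: sum_subtractf sum_distrib_left power2_eq_square mult_ac)
    then show ?thesis
      using \<epsilon>(1) by (rule mult_left_le_imp_le)
  qed
  then have "4 / kS * (muB * g * (\<Sum>l < 3 * 2 ^ p. field_variation u ustar l)) \<le> 0"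
    by (rule nonpos_if_le_eps_mult)
  then show ?thesis
    using kS_pos by (simp add: divide_le_0_iff mult_ac)
qed

end

theorem corollary2:
  fixes p :: nat
    and T hbar muB g kS kT gamma :: real
    and v0 m M :: "real^3"
    and A :: "nat \<Rightarrow> real^3"
    and psi chi :: "(real \<Rightarrow> real^3) \<Rightarrow> nat \<Rightarrow> real \<Rightarrow> cvec"
    and ustar :: "real \<Rightarrow> real^3"
  assumes "T > 0" and "hbar > 0" and "kS > 0" and "kT > 0" and "gamma > 0"
    and "\<forall>i. m $ i < M $ i"
    and psi_sol: "\<forall>u \<in> Ctrl T m M. \<forall>l < 3 * 2 ^ p.
          is_psi_sol p T hbar muB g A kS kT (vfilt gamma v0 u) (psiT p l) (psi u l)"
    and chi_sol: "\<forall>u \<in> Ctrl T m M. \<forall>l < 3 * 2 ^ p.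
          is_chi_sol p T hbar muB g A kS kT (vfilt gamma v0 u) (psi u l) (chi u l)"
    and ustar_adm: "ustar \<in> Ctrl T m M"
    and ustar_opt: "\<forall>u \<in> Ctrl T m M. Jcost p T kS (psi u) \<le> Jcost p T kS (psi ustar)"
  shows "\<forall>u \<in> Ctrl T m M.
           set_lebesgue_integral lborel {0..T}
             (\<lambda>t. HP p T muB g gamma (psi ustar) (u t) (chi ustar) t)
         \<le> set_lebesgue_integral lborel {0..T}
             (\<lambda>t. HP p T muB g gamma (psi ustar) (ustar t) (chi ustar) t)"
proof
  fix u
  assume u: "u \<in> Ctrl T m M"
  interpret radical_pair_control p T hbar muB g kS kT gamma v0 m M A psi chi
    using \<open>T > 0\<close> \<open>hbar > 0\<close> \<open>kS > 0\<close> \<open>gamma > 0\<close> psi_sol chi_sol by unfold_locales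
  have "muB * g * (\<Sum>l < 3 * 2 ^ p. field_variation u ustar l) \<le> 0"
    by (rule optimal_field_variation_nonpos[OF u ustar_adm ustar_opt])
  then have "muB * g / (3 * 2 powr (real p - 1)) * (\<Sum>l < 3 * 2 ^ p. field_variation u ustar l) \<le> 0"
    by (simp add: divide_le_0_iff)
  then show "set_lebesgue_integral lborel {0..T} (\<lambda>t. HP p T muB g gamma (psi ustar) (u t) (chi ustar) t)
      \<le> set_lebesgue_integral lborel {0..T} (\<lambda>t. HP p T muB g gamma (psi ustar) (ustar t) (chi ustar) t)"
    using HP_integral_diff[OF u ustar_adm] by simp
qed

end
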